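(* Let $X$ be a non-empty finite set and $\mathcal{P}$ a partition of $X$ such that $\mathcal{P}$ has exactly $m_i\ge 2$ blocks of size $n_i\ge 2$ for $i=1,\dots,p$ (the $n_i$ pairwise distinct), exactly one block of each of the sizes $l_1,\dots,l_q$ with each $l_i\ge 2$ (these sizes distinct from each other and from the $n_i$), and $t$ singleton blocks, and no other blocks ($p,q,t$ may be $0$). Then $$\operatorname{rank}(\Sigma(X,\mathcal{P}):S(X,\mathcal{P}))=p+q+g'(t)-1+l,$$ where $g'(0)=0$ and $g'(t)=1$ for $t\ge 1$, and $l$ is the number of values $s\ge 2$ such that $\mathcal{P}$ has a block of size $s$ but no block of size $s-1$.
   Context: $T(X,\mathcal{P})$ is the semigroup (under composition) of maps $f:X\to X$ such that for every block $P$ there is a block $Q$ with $Pf\subseteq Q$; $S(X,\mathcal{P})$ is its group of units (bijections in $T(X,\mathcal{P})$); $\Sigma(X,\mathcal{P})$ is the subsemigroup of $f\in T(X,\mathcal{P})$ whose image intersects every block. For a subsemigroup $U$ of a semigroup $V$, $\operatorname{rank}(V:U)$ is the least cardinality of a subset $W\subseteq V$ such that $U\cup W$ generates $V$ as a semigroup. *)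

theory Defs
  imports "HOL-Library.FuncSet" "HOL-Library.Disjoint_Sets"
begin

text \<open>Maps X -> X are represented as extensional functions (value undefined outside X),
  composed with compose X.\<close>

definition Tpart :: "'a set \<Rightarrow> 'a set set \<Rightarrow> ('a \<Rightarrow> 'a) set" where
  "Tpart X P = {f \<in> X \<rightarrow>\<^sub>E X. \<forall>B\<in>P. \<exists>C\<in>P. f ` B \<subseteq> C}"

definition Spart :: "'a set \<Rightarrow> 'a set set \<Rightarrow> ('a \<Rightarrow> 'a) set" where
  "Spart X P = {f \<in> Tpart X P. bij_betw f X X}"

definition Sigmapart :: "'a set \<Rightarrow> 'a set set \<Rightarrow> ('a \<Rightarrow> 'a) set" where
  "Sigmapart X P = {f \<in> Tpart X P. \<forall>B\<in>P. f ` X \<inter> B \<noteq> {}}"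

inductive_set gen_sg :: "'a set \<Rightarrow> ('a \<Rightarrow> 'a) set \<Rightarrow> ('a \<Rightarrow> 'a) set"
  for X :: "'a set" and W :: "('a \<Rightarrow> 'a) set" where
  base: "w \<in> W \<Longrightarrow> w \<in> gen_sg X W"
| comp: "a \<in> gen_sg X W \<Longrightarrow> b \<in> gen_sg X W \<Longrightarrow> compose X a b \<in> gen_sg X W"

definition rel_rank :: "'a set \<Rightarrow> ('a \<Rightarrow> 'a) set \<Rightarrow> ('a \<Rightarrow> 'a) set \<Rightarrow> nat" where
  "rel_rank X V U = (LEAST n. \<exists>W. W \<subseteq> V \<and> finite W \<and> card W = n \<and> gen_sg X (U \<union> W) = V)"

end

theory Submission
  imports Defs "HOL-Combinatorics.Transposition"
begin

text \<open>The relative rank equals the number of block sizes s \<ge> 2 plus the number of gap sizes, i.e.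
  sizes b \<ge> 2 such that b - 1 is not a block size but some smaller size is.

  Lower bound: a generating set must contain, for every size s \<ge> 2, a map of defect one
  identifying two points of blocks of size s (needed to produce a collapse inside such a block),
  and for every gap size b a map sending a point of a block of size at least b into a smaller
  block, at a cost in defect of at most b minus the next smaller size (needed to produce an
  exchange from a b-block onto a block of that size).  Both properties pass from a product to
  one of its factors, and counting defects shows that no generator serves two sizes.

  Upper bound: one collapse in a block of each size s \<ge> 2 whose predecessor s - 1 is not a size,
  and one standard exchange between blocks of each pair of consecutive sizes, generate together
  with the units all collapses, all maps inside a block and all exchanges between two blocks;
  every element of Sigma is a product of these, by induction on the number of moved blocks.\<close>

lemma card_image_add_card_le:
  assumes "finite X" "Z \<subseteq> X"
  shows "card (f ` X) + card Z \<le> card (f ` Z) + card X"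
proof -
  have "card (f ` X) \<le> card (f ` Z \<union> f ` (X - Z))"
    using assms by (intro card_mono) (auto intro: finite_subset)
  also have "\<dots> \<le> card (f ` Z) + card (f ` (X - Z))" by (rule card_Un_le)
  also have "card (f ` (X - Z)) \<le> card (X - Z)" using assms by (intro card_image_le) auto
  also have "card (X - Z) = card X - card Z" using assms by (simp add: card_Diff_subset finite_subset)
  finally show ?thesis using card_mono[OF assms] by linarith
qed

lemma image_Diff_collision:
  assumes "a \<in> A" "a' \<in> A" "a' \<noteq> a" "f a' = f a"
  shows "f ` (A - {a}) = f ` A"
  using assms by (auto simp: image_iff) (metis DiffI singletonD)

lemma card_image_two_collisions:
  assumes "finite X" and xy: "x \<in> X" "y \<in> X" "x \<noteq> y" "f x = f y"
    and uv: "u \<in> X" "v \<in> X" "u \<noteq> v" "f u = f v" and "{x, y} \<noteq> {u, v}"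
  shows "card (f ` X) + 2 \<le> card X"
proof -
  obtain w w' where w: "w \<in> X - {v}" "w' \<in> X - {v}" "w' \<noteq> w" "f w' = f w"
    using xy uv \<open>{x, y} \<noteq> {u, v}\<close> by (metis DiffI insert_commute singletonD)
  have "f ` X = f ` (X - {v} - {w})"
    using image_Diff_collision[OF uv(2,1) uv(3) uv(4)] image_Diff_collision[OF w] by simp
  also have "card \<dots> \<le> card (X - {v} - {w})" using assms(1) by (intro card_image_le) auto
  also have "card (X - {v} - {w}) + 2 = card X"
  proof -
    have "card {v, w} \<le> card X" using assms(1) uv(2) w(1) by (intro card_mono) auto
    then show ?thesis using assms(1) uv(2) w(1) by (auto simp: card_Diff_singleton_if)
  qed
  finally show ?thesis by linarith
qed

section \<open>Blocks\<close>

locale finite_partition =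
  fixes X :: "'a set" and P :: "'a set set"
  assumes finite_X: "finite X" and partition: "partition_on X P"
begin

lemma block_subset: "B \<in> P \<Longrightarrow> B \<subseteq> X"
  using partition_onD1[OF partition] by blast

lemma block_nonempty: "B \<in> P \<Longrightarrow> B \<noteq> {}"
  using partition_onD3[OF partition] by blast

lemma blocks_disjoint: "B \<in> P \<Longrightarrow> C \<in> P \<Longrightarrow> B \<noteq> C \<Longrightarrow> B \<inter> C = {}"
  using partition_onD2[OF partition] by (auto simp: disjoint_def)

lemma finite_block: "B \<in> P \<Longrightarrow> finite B"
  using block_subset finite_X finite_subset by blast

lemma finite_blocks: "finite P"
  using finite_elements[OF finite_X partition] .

definition block_of :: "'a \<Rightarrow> 'a set" where
  "block_of x = (THE B. B \<in> P \<and> x \<in> B)"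

abbreviation block_size :: "'a \<Rightarrow> nat" where
  "block_size x \<equiv> card (block_of x)"

lemma block_of_eq: "B \<in> P \<Longrightarrow> x \<in> B \<Longrightarrow> block_of x = B"
  unfolding block_of_def by (rule the_equality) (use blocks_disjoint in auto)

lemma block_of_in_blocks: "x \<in> X \<Longrightarrow> block_of x \<in> P"
  and in_block_of: "x \<in> X \<Longrightarrow> x \<in> block_of x"
  using partition_onD1[OF partition] block_of_eq by auto

lemma block_of_subset: "x \<in> X \<Longrightarrow> block_of x \<subseteq> X"
  using block_of_in_blocks block_subset by blast

lemma Tpart_into: "f \<in> Tpart X P \<Longrightarrow> x \<in> X \<Longrightarrow> f x \<in> X"
  unfolding Tpart_def by auto

lemma Tpart_image_block_of:
  assumes "f \<in> Tpart X P" "x \<in> X"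
  shows "f ` block_of x \<subseteq> block_of (f x)"
proof -
  obtain C where C: "C \<in> P" "f ` block_of x \<subseteq> C"
    using assms block_of_in_blocks unfolding Tpart_def by blast
  then have "f x \<in> C" using in_block_of[OF assms(2)] by blast
  then show ?thesis using C block_of_eq by simp
qed

lemma Sigmapart_Tpart: "f \<in> Sigmapart X P \<Longrightarrow> f \<in> Tpart X P"
  by (simp add: Sigmapart_def)

lemma Sigmapart_meets_block: "f \<in> Sigmapart X P \<Longrightarrow> B \<in> P \<Longrightarrow> \<exists>x\<in>X. f x \<in> B"
  unfolding Sigmapart_def by auto

lemma SigmapartI:
  assumes "f \<in> X \<rightarrow>\<^sub>E X" "\<And>B. B \<in> P \<Longrightarrow> \<exists>C\<in>P. f ` B \<subseteq> C"
    and "\<And>B. B \<in> P \<Longrightarrow> \<exists>x\<in>X. f x \<in> B"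
  shows "f \<in> Sigmapart X P"
proof -
  have "f ` X \<inter> B \<noteq> {}" if "B \<in> P" for B
    using assms(3)[OF that] by blast
  then show ?thesis using assms(1,2) by (simp add: Sigmapart_def Tpart_def)
qed

lemma Spart_subset_Sigmapart: "Spart X P \<subseteq> Sigmapart X P"
proof
  fix f assume "f \<in> Spart X P"
  then have "f \<in> Tpart X P" "f ` X = X" by (auto simp: Spart_def bij_betw_def)
  moreover have "X \<inter> B \<noteq> {}" if "B \<in> P" for B
    using block_nonempty[OF that] block_subset[OF that] by blast
  ultimately show "f \<in> Sigmapart X P" by (simp add: Sigmapart_def)
qed

lemma inj_Sigmapart_imp_Spart:
  assumes "f \<in> Sigmapart X P" "inj_on f X"
  shows "f \<in> Spart X P"
proof -
  have "f ` X \<subseteq> X" using assms(1) Tpart_into Sigmapart_Tpart by blast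
  then have "f ` X = X" using endo_inj_surj finite_X assms(2) by blast
  then show ?thesis using assms unfolding Spart_def Sigmapart_def bij_betw_def by simp
qed

lemma block_size_eq: "B \<in> P \<Longrightarrow> x \<in> B \<Longrightarrow> block_size x = card B"
  using block_of_eq by simp

lemma block_size_le_inj_Tpart:
  assumes "f \<in> Tpart X P" "inj_on f X" "x \<in> X"
  shows "block_size x \<le> block_size (f x)"
proof -
  have "card (f ` block_of x) = block_size x"
    using inj_on_subset[OF assms(2) block_of_subset[OF assms(3)]] by (rule card_image)
  moreover have "card (f ` block_of x) \<le> block_size (f x)"
    using Tpart_image_block_of[OF assms(1,3)]
      finite_block[OF block_of_in_blocks[OF Tpart_into[OF assms(1,3)]]] by (rule card_mono[rotated])
  ultimately show ?thesis by simp
qed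

text \<open>An injective block-respecting map never shrinks block sizes; since it permutes the finite
  set of points lying in strictly larger blocks than x, it cannot move x into that set.\<close>
lemma Spart_block_size:
  assumes "f \<in> Spart X P" "x \<in> X"
  shows "block_size (f x) = block_size x"
proof -
  have T: "f \<in> Tpart X P" and inj: "inj_on f X"
    using assms by (auto simp: Spart_def bij_betw_def)
  have mono: "block_size z \<le> block_size (f z)" if "z \<in> X" for z
    using block_size_le_inj_Tpart T inj that by blast
  define U where "U = {z \<in> X. block_size x < block_size z}"
  have "f ` U \<subseteq> U"
  proof
    fix w assume "w \<in> f ` U"
    then obtain z where "z \<in> U" "w = f z" by blast
    then show "w \<in> U" using mono[of z] Tpart_into[OF T, of z] unfolding U_def by auto
  qed
  moreover have "inj_on f U" using inj unfolding U_def by (rule inj_on_subset) auto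
  moreover have "finite U" unfolding U_def using finite_X by simp
  ultimately have U: "f ` U = U" using endo_inj_surj by blast
  show ?thesis
  proof (rule ccontr)
    assume "block_size (f x) \<noteq> block_size x"
    then have "f x \<in> U"
      using mono[OF assms(2)] Tpart_into[OF T assms(2)] unfolding U_def by simp
    then obtain z where z: "z \<in> U" "f z = f x" using U by (metis imageE)
    then have "z = x" using inj_onD[OF inj z(2)] assms(2) unfolding U_def by blast
    then show False using z(1) unfolding U_def by simp
  qed
qed

text \<open>The induced map on blocks is onto the finite set of blocks, hence injective.\<close>
lemma Sigmapart_block_of_inj:
  assumes f: "f \<in> Sigmapart X P" and "x \<in> X" "y \<in> X"
    and eq: "block_of (f x) = block_of (f y)"
  shows "block_of x = block_of y"
proof -
  have T: "f \<in> Tpart X P" using f Sigmapart_Tpart by blast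
  define \<phi> where "\<phi> D = block_of (f (SOME z. z \<in> D))" for D
  have \<phi>: "\<phi> (block_of z) = block_of (f z)" if z: "z \<in> X" for z
  proof -
    define s where "s = (SOME s. s \<in> block_of z)"
    have s: "s \<in> block_of z" unfolding s_def using in_block_of[OF z] by (rule someI)
    have sX: "s \<in> X" using s block_of_subset[OF z] by blast
    have "block_of s = block_of z" using block_of_eq[OF block_of_in_blocks[OF z] s] .
    then have "f z \<in> block_of (f s)" using Tpart_image_block_of[OF T sX] in_block_of[OF z] by blast
    then have "block_of (f z) = block_of (f s)"
      using block_of_eq[OF block_of_in_blocks[OF Tpart_into[OF T sX]]] by blast
    then show ?thesis unfolding \<phi>_def s_def by simp
  qed
  have \<phi>_block: "\<phi> D = block_of (f z)" if "D \<in> P" "z \<in> D" for D z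
  proof -
    have "z \<in> X" using block_subset[OF that(1)] that(2) by blast
    then show ?thesis using \<phi>[of z] block_of_eq[OF that] by simp
  qed
  have "\<phi> ` P = P"
  proof
    show "\<phi> ` P \<subseteq> P"
    proof
      fix E assume "E \<in> \<phi> ` P"
      then obtain D z where D: "D \<in> P" "z \<in> D" "E = \<phi> D" using block_nonempty by blast
      then have "z \<in> X" using block_subset by blast
      then show "E \<in> P"
        using \<phi>_block[OF D(1,2)] D(3) block_of_in_blocks[OF Tpart_into[OF T]] by simp
    qed
    show "P \<subseteq> \<phi> ` P"
    proof
      fix E assume "E \<in> P"
      then obtain z where z: "z \<in> X" "f z \<in> E" using Sigmapart_meets_block f by blast
      then have "\<phi> (block_of z) = E" using \<phi> block_of_eq \<open>E \<in> P\<close> by simp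
      then show "E \<in> \<phi> ` P" using block_of_in_blocks z by blast
    qed
  qed
  then have "inj_on \<phi> P" using eq_card_imp_inj_on finite_blocks by metis
  moreover have "\<phi> (block_of x) = \<phi> (block_of y)" using \<phi> eq assms(2,3) by simp
  ultimately show ?thesis using inj_onD block_of_in_blocks assms(2,3) by metis
qed

lemma Sigmapart_compose:
  assumes a: "a \<in> Sigmapart X P" and b: "b \<in> Sigmapart X P"
  shows "compose X a b \<in> Sigmapart X P"
proof (rule SigmapartI)
  have Ta: "a \<in> Tpart X P" and Tb: "b \<in> Tpart X P" using a b Sigmapart_Tpart by auto
  show "compose X a b \<in> X \<rightarrow>\<^sub>E X"
    using Tpart_into[OF Ta] Tpart_into[OF Tb] by (auto simp: compose_def)
  show "\<exists>C\<in>P. compose X a b ` B \<subseteq> C" if B: "B \<in> P" for B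
  proof -
    obtain x where x: "x \<in> B" using block_nonempty B by blast
    have xX: "x \<in> X" using x block_subset[OF B] by blast
    have bxX: "b x \<in> X" using Tpart_into[OF Tb xX] .
    have "compose X a b ` B \<subseteq> block_of (a (b x))"
    proof
      fix w assume "w \<in> compose X a b ` B"
      then obtain y where y: "y \<in> B" "w = a (b y)"
        using block_subset[OF B] by (auto simp: compose_def)
      have "y \<in> block_of x" using block_of_eq[OF B x] y(1) by simp
      then have "b y \<in> block_of (b x)" using Tpart_image_block_of[OF Tb xX] by blast
      then show "w \<in> block_of (a (b x))" using Tpart_image_block_of[OF Ta bxX] y(2) by blast
    qed
    then show ?thesis using block_of_in_blocks[OF Tpart_into[OF Ta bxX]] by blast
  qed
  show "\<exists>z\<in>X. compose X a b z \<in> C" if C: "C \<in> P" for C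
  proof -
    obtain x where x: "x \<in> X" "a x \<in> C" using Sigmapart_meets_block a C by blast
    obtain y where y: "y \<in> X" "b y \<in> block_of x"
      using Sigmapart_meets_block[OF b block_of_in_blocks[OF x(1)]] by blast
    have "a (b y) \<in> block_of (a x)" using Tpart_image_block_of[OF Ta x(1)] y(2) by blast
    then show ?thesis using block_of_eq C x y by (auto simp: compose_def)
  qed
qed

lemma gen_sg_subset_Sigmapart:
  assumes "U \<subseteq> Sigmapart X P"
  shows "gen_sg X U \<subseteq> Sigmapart X P"
proof
  fix f assume "f \<in> gen_sg X U"
  then show "f \<in> Sigmapart X P" by induction (use assms Sigmapart_compose in auto)
qed

section \<open>Defect\<close>

definition defect :: "('a \<Rightarrow> 'a) \<Rightarrow> nat" where
  "defect f = card X - card (f ` X)"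

lemma defect_compose:
  assumes "b ` X \<subseteq> X"
  shows "defect a \<le> defect (compose X a b)" "defect b \<le> defect (compose X a b)"
proof -
  have img: "compose X a b ` X = a ` b ` X" by (auto simp: compose_def)
  have "card (a ` b ` X) \<le> card (a ` X)" using assms finite_X by (intro card_mono) auto
  then show "defect a \<le> defect (compose X a b)" unfolding defect_def img by linarith
  have "card (a ` b ` X) \<le> card (b ` X)" using finite_X by (intro card_image_le) auto
  then show "defect b \<le> defect (compose X a b)" unfolding defect_def img by linarith
qed

lemma block_size_le_defect:
  assumes "f \<in> Tpart X P" "x \<in> X"
  shows "block_size x \<le> defect f + block_size (f x)"
proof -
  have "card (f ` X) + block_size x \<le> card (f ` block_of x) + card X"
    using card_image_add_card_le[OF finite_X block_of_subset[OF assms(2)]] .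
  moreover have "card (f ` block_of x) \<le> block_size (f x)"
    using Tpart_image_block_of[OF assms]
      finite_block[OF block_of_in_blocks[OF Tpart_into[OF assms]]] by (rule card_mono[rotated])
  moreover have "card (f ` X) \<le> card X"
    using finite_X Tpart_into[OF assms(1)] by (intro card_mono) auto
  ultimately show ?thesis unfolding defect_def by linarith
qed

lemma two_block_sizes_le_defect:
  assumes f: "f \<in> Tpart X P" and x: "x \<in> X" and y: "y \<in> X"
    and ne: "block_of x \<noteq> block_of y"
  shows "block_size x + block_size y \<le> defect f + block_size (f x) + block_size (f y)"
proof -
  let ?D = "block_of x \<union> block_of y"
  have "card (f ` X) + card ?D \<le> card (f ` ?D) + card X"
    by (rule card_image_add_card_le[OF finite_X]) (use block_of_subset x y in blast)
  moreover have "card ?D = block_size x + block_size y"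
    using blocks_disjoint[OF block_of_in_blocks[OF x] block_of_in_blocks[OF y] ne]
      finite_block[OF block_of_in_blocks[OF x]] finite_block[OF block_of_in_blocks[OF y]]
    by (rule card_Un_disjoint[rotated 2])
  moreover have "card (f ` ?D) \<le> block_size (f x) + block_size (f y)"
  proof -
    have "f ` ?D \<subseteq> block_of (f x) \<union> block_of (f y)"
      using Tpart_image_block_of[OF f x] Tpart_image_block_of[OF f y] by blast
    then have "card (f ` ?D) \<le> card (block_of (f x) \<union> block_of (f y))"
      using finite_block block_of_in_blocks Tpart_into[OF f] x y by (intro card_mono) auto
    also have "\<dots> \<le> block_size (f x) + block_size (f y)" by (rule card_Un_le)
    finally show ?thesis .
  qed
  moreover have "card (f ` X) \<le> card X"
    using finite_X Tpart_into[OF f] by (intro card_mono) auto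
  ultimately show ?thesis unfolding defect_def by linarith
qed

section \<open>Collapses, exchanges and local maps\<close>

definition collapse :: "'a \<Rightarrow> 'a \<Rightarrow> 'a \<Rightarrow> 'a" where
  "collapse x y = (\<lambda>z\<in>X. if z = x then y else z)"

definition exchange :: "'a set \<Rightarrow> 'a set \<Rightarrow> ('a \<Rightarrow> 'a) \<Rightarrow> ('a \<Rightarrow> 'a) \<Rightarrow> 'a \<Rightarrow> 'a" where
  "exchange B C u v = (\<lambda>z\<in>X. if z \<in> B then u z else if z \<in> C then v z else z)"

definition local_map :: "'a set \<Rightarrow> ('a \<Rightarrow> 'a) \<Rightarrow> 'a \<Rightarrow> 'a" where
  "local_map B h = (\<lambda>z\<in>X. if z \<in> B then h z else z)"

definition standard_exchange :: "'a set \<Rightarrow> 'a set \<Rightarrow> ('a \<Rightarrow> 'a) \<Rightarrow> bool" where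
  "standard_exchange B C f \<longleftrightarrow> B \<in> P \<and> C \<in> P \<and> B \<noteq> C \<and>
    (\<exists>\<rho> \<iota>. f = exchange B C \<rho> \<iota> \<and> \<rho> ` B = C \<and> \<iota> ` C \<subseteq> B \<and> (\<forall>c\<in>C. \<rho> (\<iota> c) = c))"

lemma collapse_apply: "z \<in> X \<Longrightarrow> collapse x y z = (if z = x then y else z)"
  by (simp add: collapse_def)

lemma exchange_first: "z \<in> X \<Longrightarrow> z \<in> B \<Longrightarrow> exchange B C u v z = u z"
  and exchange_second: "z \<in> X \<Longrightarrow> z \<notin> B \<Longrightarrow> z \<in> C \<Longrightarrow> exchange B C u v z = v z"
  and exchange_other: "z \<in> X \<Longrightarrow> z \<notin> B \<Longrightarrow> z \<notin> C \<Longrightarrow> exchange B C u v z = z"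
  by (simp_all add: exchange_def)

lemma local_map_inside: "z \<in> X \<Longrightarrow> z \<in> B \<Longrightarrow> local_map B h z = h z"
  and local_map_outside: "z \<in> X \<Longrightarrow> z \<notin> B \<Longrightarrow> local_map B h z = z"
  by (simp_all add: local_map_def)

lemma exchange_commute: "B \<inter> C = {} \<Longrightarrow> exchange B C u v = exchange C B v u"
  unfolding exchange_def by (intro ext) auto

lemma local_map_Sigmapart:
  assumes B: "B \<in> P" and h: "h ` B \<subseteq> B"
  shows "local_map B h \<in> Sigmapart X P"
proof (rule SigmapartI)
  have BX: "B \<subseteq> X" using block_subset[OF B] .
  have other: "local_map B h ` D = D" if "D \<in> P" "D \<noteq> B" for D
  proof -
    have "local_map B h z = z" if "z \<in> D" for z
      using blocks_disjoint[OF \<open>D \<in> P\<close> B \<open>D \<noteq> B\<close>] block_subset[OF \<open>D \<in> P\<close>] that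
      by (intro local_map_outside) auto
    then show ?thesis by simp
  qed
  have inside: "local_map B h ` B \<subseteq> B" using BX h by (auto simp: local_map_def)
  have "h z \<in> X" if "z \<in> B" for z using that h BX by blast
  then show "local_map B h \<in> X \<rightarrow>\<^sub>E X" by (auto simp: local_map_def)
  show "\<exists>E\<in>P. local_map B h ` D \<subseteq> E" if "D \<in> P" for D
    using other[OF that] inside that B by (cases "D = B") auto
  show "\<exists>z\<in>X. local_map B h z \<in> D" if D: "D \<in> P" for D
  proof -
    obtain z where "z \<in> D" using block_nonempty D by blast
    moreover have "local_map B h ` D \<subseteq> D" using other[OF D] inside by (cases "D = B") auto
    ultimately show ?thesis using block_subset[OF D] by blast
  qed
qed

lemma local_map_Spart:
  assumes B: "B \<in> P" and h: "bij_betw h B B"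
  shows "local_map B h \<in> Spart X P"
proof (rule inj_Sigmapart_imp_Spart)
  have hB: "h ` B = B" and inj: "inj_on h B" using h by (auto simp: bij_betw_def)
  then show "local_map B h \<in> Sigmapart X P" using local_map_Sigmapart B by blast
  have "h x \<in> B" if "x \<in> B" for x using hB that by blast
  then show "inj_on (local_map B h) X"
    using inj by (auto simp: inj_on_def local_map_def)
qed

lemma collapse_eq_local_map: "x \<in> B \<Longrightarrow> collapse x y = local_map B (\<lambda>z. if z = x then y else z)"
  unfolding collapse_def local_map_def by (intro restrict_ext) auto

lemma collapse_Sigmapart:
  assumes "B \<in> P" "x \<in> B" "y \<in> B"
  shows "collapse x y \<in> Sigmapart X P"
  unfolding collapse_eq_local_map[OF assms(2)] using assms by (intro local_map_Sigmapart) auto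

lemma defect_collapse:
  assumes "x \<in> X" "y \<in> X" "x \<noteq> y"
  shows "defect (collapse x y) = 1"
proof -
  have "collapse x y ` X = X - {x}"
    using assms by (force simp: collapse_apply image_iff)
  moreover have "card X > 0" using assms(1) finite_X card_gt_0_iff by blast
  ultimately show ?thesis using assms(1) finite_X by (simp add: defect_def)
qed

lemma exchange_Sigmapart:
  assumes B: "B \<in> P" and C: "C \<in> P" and "B \<noteq> C" and u: "u ` B \<subseteq> C" and v: "v ` C \<subseteq> B"
  shows "exchange B C u v \<in> Sigmapart X P"
proof (rule SigmapartI)
  let ?e = "exchange B C u v"
  have dj: "B \<inter> C = {}" using blocks_disjoint B C \<open>B \<noteq> C\<close> by blast
  have BX: "B \<subseteq> X" and CX: "C \<subseteq> X" using block_subset B C by auto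
  have eB: "?e ` B \<subseteq> C" using BX u by (auto simp: exchange_def)
  have eC: "?e ` C \<subseteq> B" using CX v dj by (auto simp: exchange_def)
  have eD: "?e ` D = D" if D: "D \<in> P" "D \<noteq> B" "D \<noteq> C" for D
  proof -
    have "?e z = z" if "z \<in> D" for z
      using blocks_disjoint[OF D(1) B D(2)] blocks_disjoint[OF D(1) C D(3)] block_subset[OF D(1)] that
      by (intro exchange_other) auto
    then show ?thesis by simp
  qed
  have "u z \<in> X" if "z \<in> B" for z using u CX that by blast
  moreover have "v z \<in> X" if "z \<in> C" for z using v BX that by blast
  ultimately show "?e \<in> X \<rightarrow>\<^sub>E X" by (auto simp: exchange_def)
  show "\<exists>E\<in>P. ?e ` D \<subseteq> E" if "D \<in> P" for D
    using eB eC eD[OF that] B C that by (cases "D = B"; cases "D = C") auto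
  show "\<exists>z\<in>X. ?e z \<in> D" if D: "D \<in> P" for D
  proof -
    consider "D = B" | "D = C" | "D \<noteq> B" "D \<noteq> C" by blast
    then show ?thesis
    proof cases
      case 1
      obtain c where "c \<in> C" using block_nonempty C by blast
      then show ?thesis using 1 eC CX by blast
    next
      case 2
      obtain b where "b \<in> B" using block_nonempty B by blast
      then show ?thesis using 2 eB BX by blast
    next
      case 3
      obtain d where "d \<in> D" using block_nonempty D by blast
      then show ?thesis using eD[OF D 3] block_subset[OF D] by blast
    qed
  qed
qed

lemma standard_exchange_Sigmapart:
  assumes "standard_exchange B C f"
  shows "f \<in> Sigmapart X P"
proof -
  obtain \<rho> \<iota> where "B \<in> P" "C \<in> P" "B \<noteq> C" "f = exchange B C \<rho> \<iota>" "\<rho> ` B = C" "\<iota> ` C \<subseteq> B"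
    using assms unfolding standard_exchange_def by blast
  then show ?thesis using exchange_Sigmapart[of B C \<rho> \<iota>] by simp
qed

lemma standard_exchange_exists:
  assumes B: "B \<in> P" and C: "C \<in> P" and "B \<noteq> C" and "card C \<le> card B"
  shows "\<exists>f. standard_exchange B C f"
proof -
  obtain \<iota> where \<iota>: "\<iota> ` C \<subseteq> B" "inj_on \<iota> C"
    using card_le_inj[OF finite_block[OF C] finite_block[OF B] assms(4)] by blast
  obtain c0 where c0: "c0 \<in> C" using block_nonempty C by blast
  define \<rho> where "\<rho> b = (if b \<in> \<iota> ` C then inv_into C \<iota> b else c0)" for b
  have sec: "\<forall>c\<in>C. \<rho> (\<iota> c) = c" unfolding \<rho>_def using \<iota> by auto
  have "\<rho> ` B \<subseteq> C" unfolding \<rho>_def using c0 by (auto intro: inv_into_into)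
  moreover have "C \<subseteq> \<rho> ` B" using \<iota>(1) sec by (metis image_subset_iff subsetI image_eqI)
  ultimately have "\<rho> ` B = C" by blast
  then have "standard_exchange B C (exchange B C \<rho> \<iota>)"
    unfolding standard_exchange_def using assms \<iota>(1) sec by blast
  then show ?thesis by blast
qed

lemma exchange_image:
  assumes B: "B \<in> P" and C: "C \<in> P" and "B \<noteq> C" and "u ` B = C" "v ` C \<subseteq> B"
  shows "exchange B C u v ` X = (X - B) \<union> v ` C"
proof -
  have dj: "B \<inter> C = {}" using blocks_disjoint B C \<open>B \<noteq> C\<close> by blast
  have BX: "B \<subseteq> X" and CX: "C \<subseteq> X" using block_subset B C by auto
  have "X = B \<union> C \<union> (X - B - C)" using BX CX by blast
  then have "exchange B C u v ` X
      = exchange B C u v ` B \<union> exchange B C u v ` C \<union> exchange B C u v ` (X - B - C)"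
    by (metis image_Un)
  also have "\<dots> = u ` B \<union> v ` C \<union> (X - B - C)"
  proof -
    have "exchange B C u v ` B = u ` B" using BX by (intro image_cong) (auto simp: exchange_first)
    moreover have "exchange B C u v ` C = v ` C"
    proof (intro image_cong refl)
      fix z assume "z \<in> C"
      then have "z \<in> X" "z \<notin> B" using CX dj by auto
      then show "exchange B C u v z = v z" using \<open>z \<in> C\<close> by (simp add: exchange_second)
    qed
    moreover have "exchange B C u v z = z" if "z \<in> X - B - C" for z
      using that by (simp add: exchange_other)
    then have "exchange B C u v ` (X - B - C) = X - B - C" by simp
    ultimately show ?thesis by simp
  qed
  also have "\<dots> = (X - B) \<union> v ` C" using CX assms(4,5) dj by blast
  finally show ?thesis .
qed

lemma standard_exchange_defect:
  assumes "standard_exchange B C f"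
  shows "defect f = card B - card C"
proof -
  obtain \<rho> \<iota> where B: "B \<in> P" and C: "C \<in> P" and "B \<noteq> C" and f: "f = exchange B C \<rho> \<iota>"
    and \<rho>: "\<rho> ` B = C" and \<iota>: "\<iota> ` C \<subseteq> B" and sec: "\<forall>c\<in>C. \<rho> (\<iota> c) = c"
    using assms unfolding standard_exchange_def by blast
  have BX: "B \<subseteq> X" using block_subset B by blast
  have "card (\<iota> ` C) = card C" using sec by (intro card_image) (metis inj_on_inverseI)
  moreover have "card (f ` X) = card (X - B) + card (\<iota> ` C)"
    unfolding f exchange_image[OF B C \<open>B \<noteq> C\<close> \<rho> \<iota>] using \<iota> finite_X finite_block[OF C]
    by (subst card_Un_disjoint) auto
  moreover have "card (X - B) = card X - card B" using BX finite_X by (simp add: card_Diff_subset finite_subset)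
  moreover have "card C \<le> card B" using \<iota> \<open>card (\<iota> ` C) = card C\<close> finite_block[OF B] card_mono by metis
  moreover have "card B \<le> card X" using BX finite_X card_mono by blast
  ultimately show ?thesis unfolding defect_def by linarith
qed

lemma collapse_conj_involution:
  assumes t: "t \<in> X \<rightarrow>\<^sub>E X" "\<And>z. z \<in> X \<Longrightarrow> t (t z) = z" and a: "a \<in> X"
  shows "compose X t (compose X (collapse a b) t) = collapse (t a) (t b)"
proof (rule extensionalityI)
  show "compose X t (compose X (collapse a b) t) \<in> extensional X" by simp
  show "collapse (t a) (t b) \<in> extensional X" by (simp add: collapse_def)
  fix z assume z: "z \<in> X"
  have "t z \<in> X" using t(1) z by auto
  moreover have "t z = a \<longleftrightarrow> z = t a" using t(2) z a by metis
  ultimately show "compose X t (compose X (collapse a b) t) z = collapse (t a) (t b) z"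
    using z t(2) by (simp add: compose_eq collapse_apply)
qed

lemma local_map_transpose_involutive:
  assumes "B \<in> P" "c \<in> B" "d \<in> B" "z \<in> X"
  shows "local_map B (transpose c d) (local_map B (transpose c d) z) = z"
  using assms block_subset[OF assms(1)] by (cases "z \<in> B") (auto simp: local_map_def transpose_def)

lemma exchange_inv_into:
  assumes B: "B \<in> P" and C: "C \<in> P" and "B \<noteq> C" and \<beta>: "bij_betw \<beta> B C"
  defines "t \<equiv> exchange B C \<beta> (inv_into B \<beta>)"
  shows exchange_inv_into_involutive: "\<And>z. z \<in> X \<Longrightarrow> t (t z) = z"
    and exchange_inv_into_Spart: "t \<in> Spart X P"
    and exchange_inv_into_standard: "standard_exchange B C t"
proof -
  have dj: "B \<inter> C = {}" using blocks_disjoint B C \<open>B \<noteq> C\<close> by blast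
  have BX: "B \<subseteq> X" and CX: "C \<subseteq> X" using block_subset B C by auto
  have r: "\<beta> ` B = C" and inj: "inj_on \<beta> B" using \<beta> by (auto simp: bij_betw_def)
  have i: "inv_into B \<beta> ` C \<subseteq> B" using r by (auto intro: inv_into_into)
  have sec: "\<forall>c\<in>C. \<beta> (inv_into B \<beta> c) = c" using r by (auto intro: f_inv_into_f)
  show inv: "t (t z) = z" if z: "z \<in> X" for z
  proof -
    consider "z \<in> B" | "z \<notin> B" "z \<in> C" | "z \<notin> B" "z \<notin> C" by blast
    then show ?thesis
    proof cases
      case 1
      then have "\<beta> z \<in> C" "\<beta> z \<notin> B" using r dj by auto
      then show ?thesis
        using 1 z CX inj by (simp add: t_def exchange_first exchange_second inv_into_f_f subsetD)
    next
      case 2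
      then have "inv_into B \<beta> z \<in> B" using i by auto
      then show ?thesis using 2 z BX sec by (simp add: t_def exchange_first exchange_second subsetD)
    next
      case 3
      then show ?thesis using z by (simp add: t_def exchange_other)
    qed
  qed
  have "t \<in> Sigmapart X P" unfolding t_def using exchange_Sigmapart[OF B C \<open>B \<noteq> C\<close>] r i by blast
  moreover have "inj_on t X" by (rule inj_onI) (metis inv)
  ultimately show "t \<in> Spart X P" using inj_Sigmapart_imp_Spart by blast
  show "standard_exchange B C t" unfolding standard_exchange_def t_def using B C \<open>B \<noteq> C\<close> r i sec by blast
qed

lemma local_map_cong: "(\<And>z. z \<in> B \<Longrightarrow> h z = h' z) \<Longrightarrow> local_map B h = local_map B h'"
  unfolding local_map_def by (intro restrict_ext) auto

text \<open>The square of a standard exchange is the local map \<iota> \<circ> \<rho> on B, which fixes \<iota> ` C; when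
  C is one point smaller than B this leaves exactly one point of B to be moved.\<close>
lemma standard_exchange_square:
  assumes s: "standard_exchange B C s" and card: "card B = card C + 1"
  shows "\<exists>x\<in>B. \<exists>y\<in>B. x \<noteq> y \<and> compose X s s = collapse x y"
proof -
  obtain \<rho> \<iota> where B: "B \<in> P" and C: "C \<in> P" and "B \<noteq> C" and s_eq: "s = exchange B C \<rho> \<iota>"
    and \<rho>: "\<rho> ` B = C" and \<iota>: "\<iota> ` C \<subseteq> B" and sec: "\<forall>c\<in>C. \<rho> (\<iota> c) = c"
    using s unfolding standard_exchange_def by blast
  have dj: "B \<inter> C = {}" using blocks_disjoint B C \<open>B \<noteq> C\<close> by blast
  have BX: "B \<subseteq> X" and CX: "C \<subseteq> X" using block_subset B C by auto
  have square: "compose X s s = local_map B (\<iota> \<circ> \<rho>)"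
  proof (rule extensionalityI)
    show "compose X s s \<in> extensional X" "local_map B (\<iota> \<circ> \<rho>) \<in> extensional X"
      by (simp_all add: local_map_def)
    fix z assume z: "z \<in> X"
    consider "z \<in> B" | "z \<in> C" | "z \<notin> B" "z \<notin> C" by blast
    then show "compose X s s z = local_map B (\<iota> \<circ> \<rho>) z"
    proof cases
      case 1
      then have "\<rho> z \<in> C" "\<rho> z \<notin> B" using \<rho> dj by auto
      then show ?thesis using 1 z CX
        by (simp add: s_eq compose_eq exchange_first exchange_second local_map_inside subsetD)
    next
      case 2
      then have "z \<notin> B" "\<iota> z \<in> B" using \<iota> dj by auto
      then show ?thesis using 2 z BX sec
        by (simp add: s_eq compose_eq exchange_first exchange_second local_map_outside subsetD)
    next
      case 3
      then show ?thesis using z by (simp add: s_eq compose_eq exchange_other local_map_outside)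
    qed
  qed
  have "card (\<iota> ` C) = card C" using sec by (intro card_image) (metis inj_on_inverseI)
  then have "card (B - \<iota> ` C) = 1" using card \<iota> finite_block[OF B] by (simp add: card_Diff_subset finite_subset)
  then obtain x where x: "B - \<iota> ` C = {x}" by (rule card_1_singletonE)
  define y where "y = \<iota> (\<rho> x)"
  have y: "y \<in> \<iota> ` C" using \<rho> x unfolding y_def by blast
  have xy: "x \<in> B" "y \<in> B" "x \<noteq> y" using x y \<iota> by auto
  have "local_map B (\<iota> \<circ> \<rho>) = local_map B (\<lambda>z. if z = x then y else z)"
    using x sec by (intro local_map_cong) (auto simp: y_def)
  then have "compose X s s = collapse x y" using square collapse_eq_local_map[OF xy(1)] by simp
  then show ?thesis using xy by blast
qed

lemma exchange_conj_exchange: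
  assumes B: "B \<in> P" and B': "B' \<in> P" and C: "C \<in> P" and "B \<noteq> B'" "B \<noteq> C" "B' \<noteq> C"
    and u1: "u1 ` B \<subseteq> B'" and v1: "v1 ` B' \<subseteq> B" and sec: "\<forall>c\<in>B'. u1 (v1 c) = c"
    and u2: "u2 ` B' \<subseteq> C" and v2: "v2 ` C \<subseteq> B'"
  defines "s1 \<equiv> exchange B B' u1 v1" and "s2 \<equiv> exchange B' C u2 v2"
  shows "compose X s1 (compose X s2 s1) = exchange B C (u2 \<circ> u1) (v1 \<circ> v2)"
proof (rule extensionalityI)
  show "compose X s1 (compose X s2 s1) \<in> extensional X" "exchange B C (u2 \<circ> u1) (v1 \<circ> v2) \<in> extensional X"
    by (simp_all add: exchange_def)
  have dj: "B \<inter> B' = {}" "B \<inter> C = {}" "B' \<inter> C = {}" using blocks_disjoint B B' C assms(4-6) by auto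
  have BX: "B \<subseteq> X" "B' \<subseteq> X" "C \<subseteq> X" using block_subset B B' C by auto
  fix z assume z: "z \<in> X"
  consider "z \<in> B" | "z \<in> B'" | "z \<in> C" | "z \<notin> B" "z \<notin> B'" "z \<notin> C" by blast
  then show "compose X s1 (compose X s2 s1) z = exchange B C (u2 \<circ> u1) (v1 \<circ> v2) z"
  proof cases
    case 1
    then have "u1 z \<in> B'" "u2 (u1 z) \<in> C" using u1 u2 by auto
    moreover have "u2 (u1 z) \<notin> B" "u2 (u1 z) \<notin> B'" using calculation(2) dj by auto
    ultimately show ?thesis using 1 z dj BX
      by (simp add: s1_def s2_def compose_eq exchange_first exchange_other disjoint_iff subsetD)
  next
    case 2
    then have "z \<notin> B" "z \<notin> C" "v1 z \<in> B" using v1 dj by auto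
    then show ?thesis using 2 z dj BX sec
      by (simp add: s1_def s2_def compose_eq exchange_first exchange_second exchange_other
          disjoint_iff subsetD)
  next
    case 3
    then have "z \<notin> B" "z \<notin> B'" "v2 z \<in> B'" "v2 z \<notin> B" "v1 (v2 z) \<in> B" using v1 v2 dj by auto
    then show ?thesis using 3 z dj BX
      by (simp add: s1_def s2_def compose_eq exchange_first exchange_second exchange_other
          disjoint_iff subsetD)
  next
    case 4
    then show ?thesis using z by (simp add: s1_def s2_def compose_eq exchange_other)
  qed
qed

lemma standard_exchange_compose:
  assumes s1: "standard_exchange B B' s1" and s2: "standard_exchange B' C s2" and "B \<noteq> C"
  shows "standard_exchange B C (compose X s1 (compose X s2 s1))"
proof -
  obtain \<rho>1 \<iota>1 where B: "B \<in> P" and B': "B' \<in> P" and "B \<noteq> B'" and s1_eq: "s1 = exchange B B' \<rho>1 \<iota>1"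
    and \<rho>1: "\<rho>1 ` B = B'" and \<iota>1: "\<iota>1 ` B' \<subseteq> B" and sec1: "\<forall>c\<in>B'. \<rho>1 (\<iota>1 c) = c"
    using s1 unfolding standard_exchange_def by blast
  obtain \<rho>2 \<iota>2 where C: "C \<in> P" and "B' \<noteq> C" and s2_eq: "s2 = exchange B' C \<rho>2 \<iota>2"
    and \<rho>2: "\<rho>2 ` B' = C" and \<iota>2: "\<iota>2 ` C \<subseteq> B'" and sec2: "\<forall>c\<in>C. \<rho>2 (\<iota>2 c) = c"
    using s2 unfolding standard_exchange_def by blast
  have "compose X s1 (compose X s2 s1) = exchange B C (\<rho>2 \<circ> \<rho>1) (\<iota>1 \<circ> \<iota>2)"
    unfolding s1_eq s2_eq using B B' C assms(3) \<open>B \<noteq> B'\<close> \<open>B' \<noteq> C\<close> \<rho>1 \<iota>1 sec1 \<rho>2 \<iota>2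
    by (intro exchange_conj_exchange) auto
  moreover have "(\<rho>2 \<circ> \<rho>1) ` B = C" using \<rho>1 \<rho>2 by (metis image_comp)
  moreover have "(\<iota>1 \<circ> \<iota>2) ` C \<subseteq> B" using \<iota>1 \<iota>2 by auto
  moreover have "\<forall>c\<in>C. (\<rho>2 \<circ> \<rho>1) ((\<iota>1 \<circ> \<iota>2) c) = c" using sec1 sec2 \<iota>2 by auto
  ultimately show ?thesis unfolding standard_exchange_def using B C assms(3) by blast
qed

lemma exchange_factor_standard_exchange:
  assumes s: "standard_exchange B C s" and u: "u ` B \<subseteq> C" and v: "v ` C \<subseteq> B"
  obtains h1 h2 where "h1 ` B \<subseteq> B" "h2 ` B \<subseteq> B"
    "exchange B C u v = compose X (local_map B h1) (compose X s (local_map B h2))"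
proof -
  obtain \<rho> \<iota> where B: "B \<in> P" and C: "C \<in> P" and "B \<noteq> C" and s_def: "s = exchange B C \<rho> \<iota>"
    and \<rho>: "\<rho> ` B = C" and \<iota>: "\<iota> ` C \<subseteq> B" and sec: "\<forall>c\<in>C. \<rho> (\<iota> c) = c"
    using s unfolding standard_exchange_def by blast
  have dj: "B \<inter> C = {}" using blocks_disjoint B C \<open>B \<noteq> C\<close> by blast
  have BX: "B \<subseteq> X" and CX: "C \<subseteq> X" using block_subset B C by auto
  have inj: "inj_on \<iota> C" using sec by (metis inj_on_inverseI)
  obtain h2 where h2: "\<forall>b\<in>B. h2 b \<in> B \<and> \<rho> (h2 b) = u b"
    using bchoice[of B "\<lambda>b b'. b' \<in> B \<and> \<rho> b' = u b"] u \<rho> by (metis image_subset_iff imageE)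
  define h1 where "h1 b = (if b \<in> \<iota> ` C then v (inv_into C \<iota> b) else b)" for b
  have h1: "h1 ` B \<subseteq> B" unfolding h1_def using v inj by (auto simp: inv_into_into)
  have "exchange B C u v = compose X (local_map B h1) (compose X s (local_map B h2))"
  proof (rule extensionalityI)
    show "exchange B C u v \<in> extensional X" by (simp add: exchange_def)
    show "compose X (local_map B h1) (compose X s (local_map B h2)) \<in> extensional X" by simp
    fix z assume z: "z \<in> X"
    consider "z \<in> B" | "z \<notin> B" "z \<in> C" | "z \<notin> B" "z \<notin> C" by blast
    then show "exchange B C u v z = compose X (local_map B h1) (compose X s (local_map B h2)) z"
    proof cases
      case 1
      have "h2 z \<in> B" "\<rho> (h2 z) = u z" using h2 1 by auto
      moreover have "u z \<in> C" "u z \<notin> B" using u 1 dj by auto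
      ultimately show ?thesis
        using z 1 BX CX by (simp add: s_def compose_eq exchange_first local_map_inside
            local_map_outside subsetD)
    next
      case 2
      have "\<iota> z \<in> B" using \<iota> 2 by blast
      moreover have "h1 (\<iota> z) = v z" unfolding h1_def using 2 inj by (simp add: inv_into_f_f)
      ultimately show ?thesis
        using z 2 BX by (simp add: s_def compose_eq exchange_second local_map_inside
            local_map_outside subsetD)
    next
      case 3
      then show ?thesis using z by (simp add: s_def compose_eq exchange_other local_map_outside)
    qed
  qed
  then show thesis using that h1 h2 by blast
qed

lemma local_map_factor_collapse:
  assumes B: "B \<in> P" and xy: "x \<in> B" "y \<in> B" "x \<noteq> y" "h x = h y"
  shows "local_map B h = compose X (local_map B (h(x := z))) (collapse x y)"
proof (rule extensionalityI)
  show "local_map B h \<in> extensional X" by (simp add: local_map_def)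
  show "compose X (local_map B (h(x := z))) (collapse x y) \<in> extensional X" by simp
  have BX: "B \<subseteq> X" using block_subset B by blast
  fix w assume w: "w \<in> X"
  show "local_map B h w = compose X (local_map B (h(x := z))) (collapse x y) w"
  proof (cases "w \<in> B")
    case True
    then show ?thesis using w xy BX
      by (cases "w = x") (simp_all add: compose_eq collapse_apply local_map_inside subsetD)
  next
    case False
    then have "w \<noteq> x" using xy by auto
    then show ?thesis using w False by (simp add: compose_eq collapse_apply local_map_outside)
  qed
qed

section \<open>Block sizes\<close>

definition sizes :: "nat set" where
  "sizes = card ` P"

definition nontrivial_sizes :: "nat set" where
  "nontrivial_sizes = {s \<in> sizes. 2 \<le> s}"

definition gap_sizes :: "nat set" where
  "gap_sizes = {b \<in> sizes. 2 \<le> b \<and> b - 1 \<notin> sizes \<and> (\<exists>z\<in>sizes. z < b)}"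

definition prev_size :: "nat \<Rightarrow> nat" where
  "prev_size b = Max {z \<in> sizes. z < b}"

lemma finite_sizes: "finite sizes"
  unfolding sizes_def using finite_blocks by simp

lemma block_size_in_sizes: "x \<in> X \<Longrightarrow> block_size x \<in> sizes"
  unfolding sizes_def using block_of_in_blocks by blast

lemma sizes_obtain_block: "s \<in> sizes \<Longrightarrow> \<exists>B\<in>P. card B = s"
  unfolding sizes_def by blast

lemma sizes_positive: "s \<in> sizes \<Longrightarrow> 0 < s"
  unfolding sizes_def using block_nonempty finite_block by (auto simp: card_gt_0_iff)

lemma prev_size:
  assumes "b \<in> gap_sizes"
  shows prev_size_in_sizes: "prev_size b \<in> sizes"
    and prev_size_less: "prev_size b < b"
    and prev_size_add_two_le: "prev_size b + 2 \<le> b"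
    and le_prev_size: "\<And>z. z \<in> sizes \<Longrightarrow> z < b \<Longrightarrow> z \<le> prev_size b"
proof -
  have fin: "finite {z \<in> sizes. z < b}" using finite_sizes by simp
  have "{z \<in> sizes. z < b} \<noteq> {}" using assms unfolding gap_sizes_def by blast
  then have m: "prev_size b \<in> {z \<in> sizes. z < b}" unfolding prev_size_def using fin Max_in by blast
  then show "prev_size b \<in> sizes" "prev_size b < b" by auto
  have "prev_size b \<noteq> b - 1" using m assms unfolding gap_sizes_def by auto
  then show "prev_size b + 2 \<le> b" using m by auto
  show "\<And>z. z \<in> sizes \<Longrightarrow> z < b \<Longrightarrow> z \<le> prev_size b" unfolding prev_size_def using fin by simp
qed

definition standard_exchange_of_sizes :: "nat \<Rightarrow> nat \<Rightarrow> ('a \<Rightarrow> 'a) \<Rightarrow> bool" where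
  "standard_exchange_of_sizes b a w \<longleftrightarrow>
    (\<exists>B\<in>P. \<exists>C\<in>P. card B = b \<and> card C = a \<and> standard_exchange B C w)"

definition collapse_of_size :: "nat \<Rightarrow> ('a \<Rightarrow> 'a) \<Rightarrow> bool" where
  "collapse_of_size s w \<longleftrightarrow> (\<exists>B\<in>P. card B = s \<and> (\<exists>x\<in>B. \<exists>y\<in>B. x \<noteq> y \<and> w = collapse x y))"

lemma standard_exchange_of_sizes_exists:
  assumes "a \<in> sizes" "b \<in> sizes" "a < b"
  shows "\<exists>w. standard_exchange_of_sizes b a w"
proof -
  obtain B where B: "B \<in> P" "card B = b" using assms(2) sizes_obtain_block by blast
  obtain C where C: "C \<in> P" "card C = a" using assms(1) sizes_obtain_block by blast
  have "B \<noteq> C" using B C assms(3) by auto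
  then obtain w where "standard_exchange B C w"
    using standard_exchange_exists[OF B(1) C(1)] B C assms(3) by fastforce
  then show ?thesis using B C unfolding standard_exchange_of_sizes_def by blast
qed

lemma collapse_of_size_exists:
  assumes "s \<in> nontrivial_sizes"
  shows "\<exists>w. collapse_of_size s w"
proof -
  obtain B where B: "B \<in> P" "card B = s"
    using assms sizes_obtain_block unfolding nontrivial_sizes_def by blast
  then have "\<not> card B \<le> Suc 0" using assms unfolding nontrivial_sizes_def by simp
  then show ?thesis
    using card_le_Suc0_iff_eq[OF finite_block[OF B(1)]] B unfolding collapse_of_size_def by blast
qed

lemma standard_exchange_of_sizes_Sigmapart: "standard_exchange_of_sizes b a w \<Longrightarrow> w \<in> Sigmapart X P"
  using standard_exchange_Sigmapart unfolding standard_exchange_of_sizes_def by blast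

lemma collapse_of_size_Sigmapart: "collapse_of_size s w \<Longrightarrow> w \<in> Sigmapart X P"
  using collapse_Sigmapart unfolding collapse_of_size_def by blast

section \<open>Lower bound\<close>

definition identifies_in_size :: "nat \<Rightarrow> ('a \<Rightarrow> 'a) \<Rightarrow> bool" where
  "identifies_in_size s f \<longleftrightarrow>
    (\<exists>x\<in>X. \<exists>y\<in>X. x \<noteq> y \<and> f x = f y \<and> block_size x = s \<and> block_size y = s)"

definition drops_below :: "nat \<Rightarrow> ('a \<Rightarrow> 'a) \<Rightarrow> bool" where
  "drops_below b f \<longleftrightarrow> (\<exists>x\<in>X. b \<le> block_size x \<and> block_size (f x) < b)"

lemma identifies_in_size_unique:
  assumes "defect f \<le> 1" "identifies_in_size s f" "identifies_in_size s' f"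
  shows "s = s'"
proof (rule ccontr)
  assume "s \<noteq> s'"
  obtain x y u v where "x \<in> X" "y \<in> X" "x \<noteq> y" "f x = f y" "block_size x = s" "block_size y = s"
    "u \<in> X" "v \<in> X" "u \<noteq> v" "f u = f v" "block_size u = s'" "block_size v = s'"
    using assms(2,3) unfolding identifies_in_size_def by blast
  moreover from this \<open>s \<noteq> s'\<close> have "{x, y} \<noteq> {u, v}" by (auto simp: doubleton_eq_iff)
  ultimately have "card (f ` X) + 2 \<le> card X" by (intro card_image_two_collisions[OF finite_X])
  then show False using assms(1) unfolding defect_def by linarith
qed

text \<open>Identifying two points, or dropping below a size, is inherited by a single factor of a
  product of generators: units preserve block sizes, and a product of defect at most one has room
  for only one collision.\<close>
lemma gen_sg_identifies_in_size:
  assumes W: "W \<subseteq> Sigmapart X P" and f: "f \<in> gen_sg X (Spart X P \<union> W)"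
  shows "defect f \<le> 1 \<Longrightarrow> identifies_in_size s f \<Longrightarrow> \<exists>w\<in>W. defect w \<le> 1 \<and> identifies_in_size s w"
  using f
proof induction
  case (base w)
  show ?case
  proof (cases "w \<in> W")
    case False
    then have "inj_on w X" using base by (auto simp: Spart_def bij_betw_def)
    then show ?thesis using base by (auto simp: identifies_in_size_def dest: inj_onD)
  qed (use base in blast)
next
  case (comp a b)
  have "b \<in> Sigmapart X P"
    using comp(2) gen_sg_subset_Sigmapart W Spart_subset_Sigmapart by blast
  then have bX: "b ` X \<subseteq> X" using Tpart_into Sigmapart_Tpart by blast
  have la: "defect a \<le> 1" and lb: "defect b \<le> 1" using defect_compose[OF bX, of a] comp(5) by auto
  obtain x y where xy: "x \<in> X" "y \<in> X" "x \<noteq> y" "a (b x) = a (b y)"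
    "block_size x = s" "block_size y = s"
    using comp(6) by (auto simp: identifies_in_size_def compose_def)
  show ?case
  proof (cases "b x = b y")
    case True
    then have "identifies_in_size s b" using xy unfolding identifies_in_size_def by blast
    then show ?thesis using comp(4) lb by blast
  next
    case False
    show ?thesis
    proof (cases "inj_on b X")
      case True
      then have bS: "b \<in> Spart X P" using \<open>b \<in> Sigmapart X P\<close> inj_Sigmapart_imp_Spart by blast
      have "identifies_in_size s a" unfolding identifies_in_size_def
        using xy False bX Spart_block_size[OF bS] by (intro bexI[of _ "b x"] bexI[of _ "b y"]) auto
      then show ?thesis using comp(3) la by blast
    next
      case False
      then obtain u v where uv: "u \<in> X" "v \<in> X" "u \<noteq> v" "b u = b v" unfolding inj_on_def by blast
      have "{x, y} \<noteq> {u, v}" using \<open>b x \<noteq> b y\<close> uv by (auto simp: doubleton_eq_iff)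
      then have "card (compose X a b ` X) + 2 \<le> card X"
        using xy uv by (intro card_image_two_collisions[OF finite_X]) (auto simp: compose_def)
      then show ?thesis using comp(5) unfolding defect_def by linarith
    qed
  qed
qed

lemma gen_sg_drops_below:
  assumes W: "W \<subseteq> Sigmapart X P" and f: "f \<in> gen_sg X (Spart X P \<union> W)"
  shows "drops_below b f \<Longrightarrow> \<exists>w\<in>W. drops_below b w \<and> defect w \<le> defect f"
  using f
proof induction
  case (base w)
  then show ?case using Spart_block_size by (auto simp: drops_below_def)
next
  case (comp a c)
  have "c \<in> Sigmapart X P"
    using comp(2) gen_sg_subset_Sigmapart W Spart_subset_Sigmapart by blast
  then have cX: "c ` X \<subseteq> X" using Tpart_into Sigmapart_Tpart by blast
  obtain x where x: "x \<in> X" "b \<le> block_size x" "block_size (a (c x)) < b"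
    using comp(5) by (auto simp: drops_below_def compose_def)
  show ?case
  proof (cases "block_size (c x) < b")
    case True
    then have "drops_below b c" using x unfolding drops_below_def by blast
    then show ?thesis using comp(4) defect_compose[OF cX, of a] by fastforce
  next
    case False
    then have "drops_below b a" using x cX unfolding drops_below_def by (intro bexI[of _ "c x"]) auto
    then show ?thesis using comp(3) defect_compose[OF cX, of a] by fastforce
  qed
qed

lemma drops_below_gap_defect:
  assumes "b \<in> gap_sizes" "w \<in> Tpart X P" "drops_below b w"
  shows "2 \<le> defect w"
proof -
  obtain x where x: "x \<in> X" "b \<le> block_size x" "block_size (w x) < b"
    using assms(3) unfolding drops_below_def by blast
  have "block_size (w x) \<le> prev_size b"
    using le_prev_size[OF assms(1) block_size_in_sizes[OF Tpart_into[OF assms(2) x(1)]]] x(3) .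
  then show ?thesis
    using block_size_le_defect[OF assms(2) x(1)] x(2) prev_size_add_two_le[OF assms(1)] by linarith
qed

text \<open>Dropping below two gap sizes b1 < b2 either empties a block of size at least b2 into one
  block of size less than b1, or empties two blocks; both cost more than b1 - prev_size b1.\<close>
lemma drops_below_two_gaps_defect:
  assumes b1: "b1 \<in> gap_sizes" and "b1 < b2" and w: "w \<in> Tpart X P"
    and "drops_below b1 w" "drops_below b2 w"
  shows "b1 < defect w + prev_size b1"
proof -
  obtain x where x: "x \<in> X" "b1 \<le> block_size x" "block_size (w x) < b1"
    using assms(4) unfolding drops_below_def by blast
  obtain y where y: "y \<in> X" "b2 \<le> block_size y" "block_size (w y) < b2"
    using assms(5) unfolding drops_below_def by blast
  have wx: "block_size (w x) \<le> prev_size b1"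
    using le_prev_size[OF b1 block_size_in_sizes[OF Tpart_into[OF w x(1)]]] x(3) .
  show ?thesis
  proof (cases "block_of x = block_of y")
    case True
    then show ?thesis
      using block_size_le_defect[OF w x(1)] wx y(2) \<open>b1 < b2\<close> by simp
  next
    case False
    then show ?thesis
      using two_block_sizes_le_defect[OF w x(1) y(1)] wx x(2) y(2,3) by linarith
  qed
qed

lemma generator_identifies_in_size:
  assumes W: "W \<subseteq> Sigmapart X P" and gen: "gen_sg X (Spart X P \<union> W) = Sigmapart X P"
    and s: "s \<in> nontrivial_sizes"
  shows "\<exists>w\<in>W. defect w \<le> 1 \<and> identifies_in_size s w"
proof -
  obtain B where B: "B \<in> P" "card B = s" using s sizes_obtain_block unfolding nontrivial_sizes_def by blast
  then have "\<not> card B \<le> Suc 0" using s unfolding nontrivial_sizes_def by simp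
  then obtain x y where xy: "x \<in> B" "y \<in> B" "x \<noteq> y"
    using card_le_Suc0_iff_eq[OF finite_block[OF B(1)]] by blast
  have X: "x \<in> X" "y \<in> X" using xy block_subset[OF B(1)] by auto
  have "identifies_in_size s (collapse x y)"
    unfolding identifies_in_size_def using X xy block_size_eq[OF B(1)] B(2)
    by (intro bexI[of _ x] bexI[of _ y]) (auto simp: collapse_apply)
  moreover have "collapse x y \<in> gen_sg X (Spart X P \<union> W)"
    using gen collapse_Sigmapart[OF B(1) xy(1,2)] by blast
  ultimately show ?thesis using gen_sg_identifies_in_size[OF W] defect_collapse[OF X xy(3)] by simp
qed

lemma generator_drops_below:
  assumes W: "W \<subseteq> Sigmapart X P" and gen: "gen_sg X (Spart X P \<union> W) = Sigmapart X P"
    and b: "b \<in> gap_sizes"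
  shows "\<exists>w\<in>W. drops_below b w \<and> defect w + prev_size b \<le> b"
proof -
  obtain B where B: "B \<in> P" "card B = b" using b sizes_obtain_block unfolding gap_sizes_def by blast
  obtain C where C: "C \<in> P" "card C = prev_size b"
    using sizes_obtain_block prev_size_in_sizes[OF b] by blast
  have "B \<noteq> C" using B C prev_size_less[OF b] by auto
  then obtain f where f: "standard_exchange B C f"
    using standard_exchange_exists B C prev_size_less[OF b] by fastforce
  then obtain \<rho> \<iota> where "f = exchange B C \<rho> \<iota>" "\<rho> ` B = C"
    unfolding standard_exchange_def by blast
  moreover obtain x where x: "x \<in> B" using block_nonempty B by blast
  moreover have xX: "x \<in> X" using x block_subset[OF B(1)] by blast
  ultimately have "f x \<in> C" by (auto simp: exchange_first)
  then have "block_size (f x) < b" using block_size_eq[OF C(1)] C(2) prev_size_less[OF b] by simp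
  then have "drops_below b f"
    unfolding drops_below_def using xX block_size_eq[OF B(1) x] B(2) by auto
  moreover have "f \<in> gen_sg X (Spart X P \<union> W)" using gen standard_exchange_Sigmapart[OF f] by blast
  ultimately show ?thesis
    using gen_sg_drops_below[OF W] standard_exchange_defect[OF f] B C prev_size_less[OF b] by fastforce
qed

lemma card_sizes_le_card_generators:
  assumes W: "W \<subseteq> Sigmapart X P" "finite W" and gen: "gen_sg X (Spart X P \<union> W) = Sigmapart X P"
  shows "card nontrivial_sizes + card gap_sizes \<le> card W"
proof -
  obtain w1 where w1: "\<forall>s\<in>nontrivial_sizes. w1 s \<in> W \<and> defect (w1 s) \<le> 1 \<and> identifies_in_size s (w1 s)"
    using bchoice generator_identifies_in_size[OF W(1) gen] by (metis (no_types, lifting))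
  obtain w2 where w2: "\<forall>b\<in>gap_sizes. w2 b \<in> W \<and> drops_below b (w2 b) \<and> defect (w2 b) + prev_size b \<le> b"
    using bchoice generator_drops_below[OF W(1) gen] by (metis (no_types, lifting))
  have T: "w \<in> Tpart X P" if "w \<in> W" for w using that W(1) Sigmapart_Tpart by blast
  have "inj_on w1 nontrivial_sizes"
    using w1 identifies_in_size_unique by (metis inj_onI)
  moreover have "inj_on w2 gap_sizes"
  proof (rule inj_onI)
    fix b b' assume b: "b \<in> gap_sizes" "b' \<in> gap_sizes" "w2 b = w2 b'"
    show "b = b'"
      using drops_below_two_gaps_defect[of b b' "w2 b"] drops_below_two_gaps_defect[of b' b "w2 b"]
        w2 b T by (metis linorder_neqE_nat not_le)
  qed
  moreover have "w1 ` nontrivial_sizes \<inter> w2 ` gap_sizes = {}"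
    using w1 w2 drops_below_gap_defect T by fastforce
  moreover have "finite nontrivial_sizes" "finite gap_sizes"
    using finite_sizes unfolding nontrivial_sizes_def gap_sizes_def by auto
  ultimately have "card (w1 ` nontrivial_sizes \<union> w2 ` gap_sizes) = card nontrivial_sizes + card gap_sizes"
    by (simp add: card_Un_disjoint card_image)
  moreover have "w1 ` nontrivial_sizes \<union> w2 ` gap_sizes \<subseteq> W" using w1 w2 by blast
  ultimately show ?thesis using card_mono[OF W(2)] by metis
qed

section \<open>Splitting off moved blocks\<close>

definition moved_blocks :: "('a \<Rightarrow> 'a) \<Rightarrow> 'a set set" where
  "moved_blocks f = {D \<in> P. \<exists>x\<in>D. f x \<noteq> x}"

lemma finite_moved_blocks: "finite (moved_blocks f)"
  unfolding moved_blocks_def using finite_blocks by simp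

lemma no_moved_blocks_Spart:
  assumes f: "f \<in> Sigmapart X P" and "moved_blocks f = {}"
  shows "f \<in> Spart X P"
proof -
  have "f z = z" if "z \<in> X" for z
    using assms(2) block_of_in_blocks[OF that] in_block_of[OF that] unfolding moved_blocks_def by blast
  then have "inj_on f X" by (intro inj_onI) simp
  then show ?thesis using inj_Sigmapart_imp_Spart f by blast
qed

lemma Sigmapart_factor_local_map:
  assumes f: "f \<in> Sigmapart X P" and D: "D \<in> P" "f ` D \<subseteq> D"
  obtains g where "g \<in> Sigmapart X P" "moved_blocks g \<subseteq> moved_blocks f - {D}"
    "f = compose X g (local_map D f)"
proof
  have T: "f \<in> Tpart X P" using f Sigmapart_Tpart by blast
  have DX: "D \<subseteq> X" using block_subset D by blast
  define g where "g = (\<lambda>z\<in>X. if z \<in> D then z else f z)"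
  have g_other: "g z = f z" if "z \<in> X" "z \<notin> D" for z using that by (simp add: g_def)
  show "g \<in> Sigmapart X P"
  proof (rule SigmapartI)
    show "g \<in> X \<rightarrow>\<^sub>E X" using Tpart_into[OF T] by (auto simp: g_def)
    show "\<exists>E'\<in>P. g ` E \<subseteq> E'" if E: "E \<in> P" for E
    proof (cases "E = D")
      case True
      then show ?thesis using E DX by (intro bexI[of _ D]) (auto simp: g_def)
    next
      case False
      obtain C where C: "C \<in> P" "f ` E \<subseteq> C" using T E unfolding Tpart_def by blast
      have "g z = f z" if "z \<in> E" for z
        using g_other blocks_disjoint[OF E D(1) False] block_subset[OF E] that by blast
      then have "g ` E \<subseteq> C" using C(2) by auto
      then show ?thesis using C by blast
    qed
    show "\<exists>z\<in>X. g z \<in> F" if F: "F \<in> P" for F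
    proof (cases "F = D")
      case True
      obtain d where "d \<in> D" using block_nonempty D by blast
      then show ?thesis using True DX by (intro bexI[of _ d]) (auto simp: g_def)
    next
      case False
      obtain x where x: "x \<in> X" "f x \<in> F" using Sigmapart_meets_block f F by blast
      then have "x \<notin> D" using D(2) blocks_disjoint[OF F D(1) False] by blast
      then show ?thesis using x g_other by metis
    qed
  qed
  show "moved_blocks g \<subseteq> moved_blocks f - {D}"
    using block_subset g_other unfolding moved_blocks_def g_def by fastforce
  show "f = compose X g (local_map D f)"
  proof (rule extensionalityI)
    show "f \<in> extensional X" using T by (simp add: Tpart_def PiE_def)
    show "compose X g (local_map D f) \<in> extensional X" by simp
    fix z assume z: "z \<in> X"
    show "f z = compose X g (local_map D f) z"
      using z D(2) DX by (cases "z \<in> D") (auto simp: g_def compose_eq local_map_def)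
  qed
qed

text \<open>A cofactor g of the exchange of B and C satisfies f = g \<circ> exchange B C f \<iota>
  (exchange_cofactor_compose); as it fixes C pointwise, it moves fewer blocks than f.\<close>
definition exchange_cofactor ::
    "'a set \<Rightarrow> 'a set \<Rightarrow> ('a \<Rightarrow> 'a) \<Rightarrow> ('a \<Rightarrow> 'a) \<Rightarrow> ('a \<Rightarrow> 'a) \<Rightarrow> bool" where
  "exchange_cofactor B C f \<iota> g \<longleftrightarrow>
    g \<in> X \<rightarrow>\<^sub>E X \<and> (\<forall>c\<in>C. g c = c \<and> g (\<iota> c) = f c) \<and> (\<forall>z\<in>X - B - C. g z = f z)"

lemma exchange_cofactor_exists:
  assumes T: "f \<in> Tpart X P" and B: "B \<in> P" and C: "C \<in> P" "B \<noteq> C"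
    and \<iota>: "\<iota> ` C \<subseteq> B" "inj_on \<iota> C"
  obtains g E where "exchange_cofactor B C f \<iota> g" "E \<in> P" "g ` B \<subseteq> E"
proof -
  have BX: "B \<subseteq> X" and CX: "C \<subseteq> X" using block_subset B C by auto
  have dj: "B \<inter> C = {}" using blocks_disjoint B C by blast
  obtain c0 where c0: "c0 \<in> C" using block_nonempty C by blast
  define E where "E = block_of (f c0)"
  define g where "g = (\<lambda>z\<in>X. if z \<in> C then z else if z \<in> B then
      (if z \<in> \<iota> ` C then f (inv_into C \<iota> z) else f c0) else f z)"
  have "f c0 \<in> X" using Tpart_into[OF T] c0 CX by blast
  then have E: "E \<in> P" "E \<subseteq> X" "f c0 \<in> E"
    using block_of_in_blocks block_of_subset in_block_of unfolding E_def by auto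
  have fC: "f c \<in> E" if "c \<in> C" for c
    using Tpart_image_block_of[OF T, of c0] block_of_eq[OF C(1) c0] that c0 CX unfolding E_def by blast
  have gB: "g ` B \<subseteq> E" using BX dj fC E(3) by (auto simp: g_def inv_into_into)
  have g_C: "\<forall>c\<in>C. g c = c \<and> g (\<iota> c) = f c" using \<iota> BX CX dj by (auto simp: g_def inv_into_f_f)
  have g_other: "\<forall>z\<in>X - B - C. g z = f z" by (simp add: g_def)
  have "g z \<in> X" if z: "z \<in> X" for z
  proof -
    consider "z \<in> C" | "z \<in> B" | "z \<in> X - B - C" using z by blast
    then show ?thesis using z g_C gB E(2) g_other Tpart_into[OF T] by cases auto
  qed
  then have "g \<in> X \<rightarrow>\<^sub>E X" by (auto simp: g_def)
  then show thesis using that E(1) gB g_C g_other unfolding exchange_cofactor_def by blast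
qed

lemma exchange_cofactor_Sigmapart:
  assumes f: "f \<in> Sigmapart X P" and B: "B \<in> P" and C: "C \<in> P" "B \<noteq> C" "f ` B \<subseteq> C"
    and \<iota>: "\<iota> ` C \<subseteq> B" and g: "exchange_cofactor B C f \<iota> g" "E \<in> P" "g ` B \<subseteq> E"
  shows "g \<in> Sigmapart X P"
proof (rule SigmapartI)
  have T: "f \<in> Tpart X P" using f Sigmapart_Tpart by blast
  have BX: "B \<subseteq> X" and CX: "C \<subseteq> X" using block_subset B C by auto
  have g_C: "g c = c" "g (\<iota> c) = f c" if "c \<in> C" for c using g(1) that by (auto simp: exchange_cofactor_def)
  have g_other: "g z = f z" if "z \<in> X" "z \<notin> B" "z \<notin> C" for z
    using g(1) that by (auto simp: exchange_cofactor_def)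
  show "g \<in> X \<rightarrow>\<^sub>E X" using g(1) by (simp add: exchange_cofactor_def)
  show "\<exists>E\<in>P. g ` D \<subseteq> E" if D: "D \<in> P" for D
  proof -
    consider "D = C" | "D = B" | "D \<noteq> B" "D \<noteq> C" by blast
    then show ?thesis
    proof cases
      case 1
      then show ?thesis using g_C C(1) by (intro bexI[of _ C]) auto
    next
      case 3
      obtain E' where E': "E' \<in> P" "f ` D \<subseteq> E'" using T D unfolding Tpart_def by blast
      have "g z = f z" if "z \<in> D" for z
        using g_other blocks_disjoint[OF D B 3(1)] blocks_disjoint[OF D C(1) 3(2)]
          block_subset[OF D] that by blast
      then show ?thesis using E' by (intro bexI[of _ E']) auto
    qed (use g in blast)
  qed
  show "\<exists>z\<in>X. g z \<in> F" if F: "F \<in> P" for F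
  proof (cases "F = C")
    case True
    obtain c where "c \<in> C" using block_nonempty C by blast
    then show ?thesis using True g_C CX by (intro bexI[of _ c]) auto
  next
    case False
    obtain x where x: "x \<in> X" "f x \<in> F" using Sigmapart_meets_block f F by blast
    have "x \<notin> B" using x C(3) blocks_disjoint[OF F C(1) False] by blast
    show ?thesis
    proof (cases "x \<in> C")
      case True
      then have "\<iota> x \<in> X" "g (\<iota> x) = f x" using \<iota> BX g_C by auto
      then show ?thesis using x(2) by (intro bexI[of _ "\<iota> x"]) simp_all
    next
      case False
      then show ?thesis using x g_other \<open>x \<notin> B\<close> by (intro bexI[of _ x]) simp_all
    qed
  qed
qed

lemma exchange_cofactor_moved_blocks:
  assumes B: "B \<in> P" and C: "C \<in> P" "B \<noteq> C" "f ` B \<subseteq> C" and g: "exchange_cofactor B C f \<iota> g"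
  shows "moved_blocks g \<subseteq> moved_blocks f - {C}"
proof
  fix E assume "E \<in> moved_blocks g"
  then obtain x where E: "E \<in> P" "x \<in> E" "g x \<noteq> x" unfolding moved_blocks_def by blast
  have "x \<in> X" using E(2) block_subset[OF E(1)] by blast
  have "E \<noteq> C" using g E unfolding exchange_cofactor_def by metis
  moreover have "\<exists>y\<in>E. f y \<noteq> y"
  proof (cases "E = B")
    case True
    then have "f x \<in> C" "x \<notin> C" using E(2) C(3) blocks_disjoint[OF B C(1,2)] by auto
    then show ?thesis using E(2) by (intro bexI[of _ x]) auto
  next
    case False
    then have "x \<notin> B" "x \<notin> C"
      using E(2) blocks_disjoint[OF E(1) B False] blocks_disjoint[OF E(1) C(1) \<open>E \<noteq> C\<close>] by blast+
    then show ?thesis using E(2,3) g \<open>x \<in> X\<close> unfolding exchange_cofactor_def by (intro bexI[of _ x]) auto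
  qed
  ultimately show "E \<in> moved_blocks f - {C}" using E(1) unfolding moved_blocks_def by blast
qed

lemma exchange_cofactor_compose:
  assumes f: "f \<in> X \<rightarrow>\<^sub>E X" and "B \<inter> C = {}" "f ` B \<subseteq> C" and g: "exchange_cofactor B C f \<iota> g"
  shows "f = compose X g (exchange B C f \<iota>)"
proof (rule extensionalityI)
  show "f \<in> extensional X" using f by (simp add: PiE_def)
  show "compose X g (exchange B C f \<iota>) \<in> extensional X" by simp
  fix z assume z: "z \<in> X"
  consider "z \<in> B" | "z \<in> C" "z \<notin> B" | "z \<notin> B" "z \<notin> C" using assms(2) by blast
  then show "f z = compose X g (exchange B C f \<iota>) z"
  proof cases
    case 1
    then show ?thesis using z assms(3) g by (auto simp: compose_eq exchange_first exchange_cofactor_def)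
  next
    case 2
    then show ?thesis using z g by (simp add: compose_eq exchange_second exchange_cofactor_def)
  next
    case 3
    then show ?thesis using z g by (simp add: compose_eq exchange_other exchange_cofactor_def)
  qed
qed

text \<open>If f moves the block B off itself, the target block is moved as well: otherwise f would
  map two blocks into it, contradicting Sigmapart_block_of_inj.\<close>
lemma moved_block_target:
  assumes f: "f \<in> Sigmapart X P" and B: "B \<in> P" "b \<in> B" and "\<not> f ` B \<subseteq> B"
  defines "C \<equiv> block_of (f b)"
  shows "C \<in> P" "f ` B \<subseteq> C" "B \<noteq> C" "C \<in> moved_blocks f"
proof -
  have T: "f \<in> Tpart X P" using f Sigmapart_Tpart by blast
  have bX: "b \<in> X" using B block_subset by blast
  show C: "C \<in> P" unfolding C_def using block_of_in_blocks Tpart_into[OF T bX] by blast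
  show fB: "f ` B \<subseteq> C" unfolding C_def using Tpart_image_block_of[OF T bX] block_of_eq[OF B] by simp
  then show "B \<noteq> C" using assms(4) by blast
  show "C \<in> moved_blocks f"
  proof (rule ccontr)
    assume "C \<notin> moved_blocks f"
    then have fixed: "f c = c" if "c \<in> C" for c using C that unfolding moved_blocks_def by blast
    obtain c where c: "c \<in> C" using block_nonempty C by blast
    then have "c \<in> X" using block_subset C by blast
    moreover have "block_of (f c) = block_of (f b)"
      using fixed[OF c] block_of_eq[OF C c] unfolding C_def by simp
    ultimately have "block_of c = block_of b" using Sigmapart_block_of_inj[OF f] bX by blast
    then have "B = C" using block_of_eq[OF B] block_of_eq[OF C(1) c] by simp
    then show False using \<open>B \<noteq> C\<close> by blast
  qed
qed

text \<open>Taking B among the largest moved blocks makes its (moved) target C inject into B.\<close>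
lemma Sigmapart_factor_exchange:
  assumes f: "f \<in> Sigmapart X P" and "moved_blocks f \<noteq> {}"
    and shifted: "\<forall>D\<in>moved_blocks f. \<not> f ` D \<subseteq> D"
  obtains B C \<iota> g where "B \<in> P" "C \<in> P" "B \<noteq> C" "f ` B \<subseteq> C" "\<iota> ` C \<subseteq> B"
    "C \<in> moved_blocks f" "g \<in> Sigmapart X P" "moved_blocks g \<subseteq> moved_blocks f - {C}"
    "f = compose X g (exchange B C f \<iota>)"
proof -
  have T: "f \<in> Tpart X P" using f Sigmapart_Tpart by blast
  obtain B where B: "B \<in> moved_blocks f" "card B = Max (card ` moved_blocks f)"
  proof -
    have "Max (card ` moved_blocks f) \<in> card ` moved_blocks f"
      using finite_moved_blocks assms(2) by (intro Max_in) auto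
    then show thesis using that by (metis imageE)
  qed
  have BP: "B \<in> P" using B(1) unfolding moved_blocks_def by blast
  obtain b where "b \<in> B" using block_nonempty BP by blast
  define C where "C = block_of (f b)"
  have C: "C \<in> P" "f ` B \<subseteq> C" "B \<noteq> C" "C \<in> moved_blocks f"
    using moved_block_target[OF f BP \<open>b \<in> B\<close>] shifted B(1) unfolding C_def by auto
  have "card C \<le> card B" using B(2) C(4) finite_moved_blocks by simp
  then obtain \<iota> where \<iota>: "\<iota> ` C \<subseteq> B" "inj_on \<iota> C"
    using card_le_inj[OF finite_block[OF C(1)] finite_block[OF BP]] by blast
  obtain g E where g: "exchange_cofactor B C f \<iota> g" "E \<in> P" "g ` B \<subseteq> E"
    using exchange_cofactor_exists[OF T BP C(1,3) \<iota>] by blast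
  have "f = compose X g (exchange B C f \<iota>)"
    using T blocks_disjoint[OF BP C(1,3)] C(2) g(1) by (intro exchange_cofactor_compose) (auto simp: Tpart_def)
  then show thesis
    using that BP C \<iota>(1) exchange_cofactor_Sigmapart[OF f BP C(1,3,2) \<iota>(1) g]
      exchange_cofactor_moved_blocks[OF BP C(1,3,2) g(1)] by blast
qed

end

section \<open>Generating Sigma\<close>

locale closed_family = finite_partition +
  fixes G :: "('a \<Rightarrow> 'a) set"
  assumes Spart_subset: "Spart X P \<subseteq> G"
    and compose_closed: "a \<in> G \<Longrightarrow> b \<in> G \<Longrightarrow> compose X a b \<in> G"
begin

lemma conjugate_closed: "a \<in> G \<Longrightarrow> b \<in> G \<Longrightarrow> compose X a (compose X b a) \<in> G"
  using compose_closed by blast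

lemma conjugate_collapse_closed:
  assumes "t \<in> Spart X P" "\<And>z. z \<in> X \<Longrightarrow> t (t z) = z" "a \<in> X" "collapse a b \<in> G"
  shows "collapse (t a) (t b) \<in> G"
proof -
  have "t \<in> X \<rightarrow>\<^sub>E X" using assms(1) Spart_subset_Sigmapart Sigmapart_Tpart by (auto simp: Tpart_def)
  then show ?thesis
    using collapse_conj_involution[OF _ assms(2,3)] conjugate_closed Spart_subset assms(1,4) by force
qed

text \<open>Conjugating by transpositions inside B carries one collapse of B to every other one.\<close>
lemma collapse_closed:
  assumes B: "B \<in> P" and x0: "x0 \<in> B" "y0 \<in> B" "x0 \<noteq> y0" and "collapse x0 y0 \<in> G"
    and xy: "x \<in> B" "y \<in> B" "x \<noteq> y"
  shows "collapse x y \<in> G"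
proof -
  have step: "collapse (transpose c d a) (transpose c d b) \<in> G"
    if "a \<in> B" "b \<in> B" "c \<in> B" "d \<in> B" "collapse a b \<in> G" for a b c d
  proof -
    have "local_map B (transpose c d) \<in> Spart X P" using local_map_Spart[OF B] that(3,4) by simp
    moreover have "a \<in> X" "b \<in> X" using that(1,2) block_subset[OF B] by auto
    ultimately have "collapse (local_map B (transpose c d) a) (local_map B (transpose c d) b) \<in> G"
      using conjugate_collapse_closed local_map_transpose_involutive[OF B that(3,4)] that(5) by blast
    then show ?thesis using that(1,2) \<open>a \<in> X\<close> \<open>b \<in> X\<close> by (simp add: local_map_inside)
  qed
  define y1 where "y1 = transpose x0 x y0"
  have y1: "y1 \<in> B" "y1 \<noteq> x" using x0 xy unfolding y1_def transpose_def by auto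
  have "collapse x y1 \<in> G"
    using step[OF x0(1,2) x0(1) xy(1) \<open>collapse x0 y0 \<in> G\<close>] unfolding y1_def by simp
  then show ?thesis using step[OF xy(1) y1(1) y1(1) xy(2)] y1(2) xy by simp
qed

text \<open>Induction on card B - card (h ` B): a non-injective h is a product of a collapse and a
  map with one more point in its image.\<close>
lemma local_map_closed:
  assumes B: "B \<in> P" and collapses: "\<And>x y. x \<in> B \<Longrightarrow> y \<in> B \<Longrightarrow> x \<noteq> y \<Longrightarrow> collapse x y \<in> G"
  shows "h ` B \<subseteq> B \<Longrightarrow> local_map B h \<in> G"
proof (induction "card B - card (h ` B)" arbitrary: h rule: less_induct)
  case less
  have finB: "finite B" using finite_block B by blast
  show ?case
  proof (cases "inj_on h B")
    case True
    then have "bij_betw h B B" using endo_inj_surj[OF finB less.prems] by (simp add: bij_betw_def)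
    then show ?thesis using local_map_Spart B Spart_subset by blast
  next
    case False
    then obtain x y where xy: "x \<in> B" "y \<in> B" "x \<noteq> y" "h x = h y" unfolding inj_on_def by blast
    have "h ` B \<noteq> B" using False eq_card_imp_inj_on[OF finB, of h] by auto
    then obtain z where z: "z \<in> B" "z \<notin> h ` B" using less.prems by blast
    have img: "h(x := z) ` B = insert z (h ` B)"
      using xy z by (auto simp: image_iff)
    have sub: "h(x := z) ` B \<subseteq> B" unfolding img using z less.prems by blast
    have "card (h(x := z) ` B) = Suc (card (h ` B))" using img z finB by simp
    moreover have "card (h(x := z) ` B) \<le> card B" by (rule card_mono[OF finB sub])
    ultimately have "card B - card (h(x := z) ` B) < card B - card (h ` B)" by linarith
    then have "local_map B (h(x := z)) \<in> G" using less.hyps sub by blast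
    then show ?thesis
      unfolding local_map_factor_collapse[OF B xy, of z] using collapses[OF xy(1-3)] by (rule compose_closed)
  qed
qed

lemma exchange_closed:
  assumes "standard_exchange B C s" "s \<in> G"
    and local_maps: "\<And>h. h ` B \<subseteq> B \<Longrightarrow> local_map B h \<in> G"
    and "u ` B \<subseteq> C" "v ` C \<subseteq> B"
  shows "exchange B C u v \<in> G"
proof -
  obtain h1 h2 where "h1 ` B \<subseteq> B" "h2 ` B \<subseteq> B"
    "exchange B C u v = compose X (local_map B h1) (compose X s (local_map B h2))"
    using exchange_factor_standard_exchange assms(1,4,5) by blast
  then show ?thesis using local_maps compose_closed \<open>s \<in> G\<close> by metis
qed

lemma standard_exchange_equal_card:
  assumes B: "B \<in> P" and C: "C \<in> P" and "B \<noteq> C" and "card C = card B"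
  shows "\<exists>s\<in>G. standard_exchange B C s"
proof -
  obtain \<beta> where "bij_betw \<beta> B C"
    using finite_same_card_bij[OF finite_block[OF B] finite_block[OF C]] assms(4) by metis
  then show ?thesis using exchange_inv_into_Spart[OF B C \<open>B \<noteq> C\<close>]
      exchange_inv_into_standard[OF B C \<open>B \<noteq> C\<close>] Spart_subset by blast
qed

lemma standard_exchange_chain:
  assumes "s1 \<in> G" "standard_exchange B B' s1" "s2 \<in> G" "standard_exchange B' C s2" "B \<noteq> C"
  shows "\<exists>s\<in>G. standard_exchange B C s"
  using standard_exchange_compose[OF assms(2,4,5)] conjugate_closed[OF assms(1,3)] by blast

lemma standard_exchange_transfer:
  assumes B: "B \<in> P" and C: "C \<in> P" and B0: "B0 \<in> P" and C0: "C0 \<in> P"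
    and card: "card B0 = card B" "card C0 = card C" "card C < card B"
    and s0: "s0 \<in> G" "standard_exchange B0 C0 s0"
  shows "\<exists>s\<in>G. standard_exchange B C s"
proof -
  have "\<exists>s\<in>G. standard_exchange B C0 s"
  proof (cases "B = B0")
    case False
    then obtain t where "t \<in> G" "standard_exchange B B0 t"
      using standard_exchange_equal_card[OF B B0] card(1) by metis
    moreover have "B \<noteq> C0" using card by auto
    ultimately show ?thesis using standard_exchange_chain s0 by blast
  qed (use s0 in blast)
  then obtain s1 where s1: "s1 \<in> G" "standard_exchange B C0 s1" by blast
  show ?thesis
  proof (cases "C = C0")
    case False
    then obtain t where "t \<in> G" "standard_exchange C0 C t"
      using standard_exchange_equal_card[OF C0 C] card(2) by metis
    moreover have "B \<noteq> C" using card by auto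
    ultimately show ?thesis using standard_exchange_chain s1 by blast
  qed (use s1 in blast)
qed

lemma collapse_transfer:
  assumes B: "B \<in> P" and B0: "B0 \<in> P" and "card B0 = card B"
    and x0: "x0 \<in> B0" "y0 \<in> B0" "x0 \<noteq> y0" "collapse x0 y0 \<in> G"
  shows "\<exists>x\<in>B. \<exists>y\<in>B. x \<noteq> y \<and> collapse x y \<in> G"
proof (cases "B = B0")
  case False
  obtain \<beta> where \<beta>: "bij_betw \<beta> B B0"
    using finite_same_card_bij[OF finite_block[OF B] finite_block[OF B0]] assms(3) by metis
  let ?t = "exchange B B0 \<beta> (inv_into B \<beta>)"
  have X: "x0 \<in> X" "y0 \<in> X" and "x0 \<notin> B" "y0 \<notin> B"
    using x0 block_subset[OF B0] blocks_disjoint[OF B B0 False] by auto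
  then have "collapse (?t x0) (?t y0) \<in> G"
    using conjugate_collapse_closed exchange_inv_into_Spart[OF B B0 False \<beta>]
      exchange_inv_into_involutive[OF B B0 False \<beta>] x0(4) by blast
  then have "collapse (inv_into B \<beta> x0) (inv_into B \<beta> y0) \<in> G"
    using X x0 \<open>x0 \<notin> B\<close> \<open>y0 \<notin> B\<close> by (simp add: exchange_second)
  moreover have "inv_into B \<beta> x0 \<in> B" "inv_into B \<beta> y0 \<in> B"
    using \<beta> x0 by (auto simp: bij_betw_def inv_into_into)
  moreover have "inv_into B \<beta> x0 \<noteq> inv_into B \<beta> y0"
    using \<beta> x0 by (metis bij_betw_imp_surj_on f_inv_into_f)
  ultimately show ?thesis by blast
qed (use x0 in blast)

end

locale generating_family = closed_family +
  assumes adjacent_exchange: "a \<in> sizes \<Longrightarrow> b \<in> sizes \<Longrightarrow> a < b \<Longrightarrow>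
      \<not> (\<exists>z\<in>sizes. a < z \<and> z < b) \<Longrightarrow> \<exists>w\<in>G. standard_exchange_of_sizes b a w"
    and gap_collapse: "s \<in> sizes \<Longrightarrow> 2 \<le> s \<Longrightarrow> s - 1 \<notin> sizes \<Longrightarrow> \<exists>w\<in>G. collapse_of_size s w"
begin

lemma standard_exchange_in:
  "B \<in> P \<Longrightarrow> C \<in> P \<Longrightarrow> B \<noteq> C \<Longrightarrow> card C \<le> card B \<Longrightarrow> \<exists>s\<in>G. standard_exchange B C s"
proof (induction "card B - card C" arbitrary: B C rule: less_induct)
  case less
  note B = less.prems(1) and C = less.prems(2)
  show ?case
  proof (cases "card C = card B")
    case True
    then show ?thesis using standard_exchange_equal_card B C less.prems(3) by blast
  next
    case False
    then have lt: "card C < card B" using less.prems(4) by simp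
    show ?thesis
    proof (cases "\<exists>D\<in>P. card C < card D \<and> card D < card B")
      case True
      then obtain D where D: "D \<in> P" "card C < card D" "card D < card B" by blast
      moreover have "card B - card D < card B - card C" "card D - card C < card B - card C"
        using D by auto
      ultimately have "\<exists>s\<in>G. standard_exchange B D s" "\<exists>s\<in>G. standard_exchange D C s"
        using less.hyps[of B D] less.hyps[of D C] B C by auto
      then show ?thesis using standard_exchange_chain less.prems(3) by blast
    next
      case False
      then have "\<not> (\<exists>z\<in>sizes. card C < z \<and> z < card B)" unfolding sizes_def by blast
      then obtain B0 C0 s0 where "B0 \<in> P" "C0 \<in> P" "card B0 = card B" "card C0 = card C"
        "s0 \<in> G" "standard_exchange B0 C0 s0"
        using adjacent_exchange[of "card C" "card B"] B C lt
        unfolding sizes_def standard_exchange_of_sizes_def by blast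
      then show ?thesis using standard_exchange_transfer[OF B C] lt by blast
    qed
  qed
qed

lemma collapse_in_block:
  assumes B: "B \<in> P" and "2 \<le> card B"
  shows "\<exists>x\<in>B. \<exists>y\<in>B. x \<noteq> y \<and> collapse x y \<in> G"
proof (cases "card B - 1 \<in> sizes")
  case True
  then obtain C where C: "C \<in> P" "card C = card B - 1" using sizes_obtain_block by blast
  then have "B \<noteq> C" using assms(2) by auto
  then obtain s where "s \<in> G" "standard_exchange B C s"
    using standard_exchange_in B C by fastforce
  moreover have "card B = card C + 1" using C assms(2) by simp
  ultimately show ?thesis using standard_exchange_square compose_closed by metis
next
  case False
  then obtain B0 x0 y0 where "B0 \<in> P" "card B0 = card B" "x0 \<in> B0" "y0 \<in> B0" "x0 \<noteq> y0"
    "collapse x0 y0 \<in> G"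
    using gap_collapse[of "card B"] B assms(2) unfolding sizes_def collapse_of_size_def by force
  then show ?thesis using collapse_transfer[OF B] by blast
qed

lemma local_map_in:
  assumes "B \<in> P" "h ` B \<subseteq> B"
  shows "local_map B h \<in> G"
proof (rule local_map_closed[OF assms(1) _ assms(2)])
  fix x y assume xy: "x \<in> B" "y \<in> B" "x \<noteq> y"
  then have "card {x, y} \<le> card B" by (intro card_mono[OF finite_block[OF assms(1)]]) auto
  then have "2 \<le> card B" using xy(3) by simp
  then show "collapse x y \<in> G"
    using collapse_in_block[OF assms(1)] collapse_closed[OF assms(1)] xy by blast
qed

lemma exchange_in:
  assumes B: "B \<in> P" and C: "C \<in> P" and "B \<noteq> C" and u: "u ` B \<subseteq> C" and v: "v ` C \<subseteq> B"
  shows "exchange B C u v \<in> G"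
proof (cases "card C \<le> card B")
  case True
  then obtain s where "s \<in> G" "standard_exchange B C s"
    using standard_exchange_in[OF B C \<open>B \<noteq> C\<close>] by blast
  then show ?thesis using exchange_closed local_map_in[OF B] u v by blast
next
  case False
  then obtain s where "s \<in> G" "standard_exchange C B s"
    using standard_exchange_in[OF C B] \<open>B \<noteq> C\<close> by force
  then have "exchange C B v u \<in> G" using exchange_closed local_map_in[OF C] u v by blast
  then show ?thesis using exchange_commute[OF blocks_disjoint[OF B C \<open>B \<noteq> C\<close>]] by simp
qed

text \<open>Induction on the number of moved blocks: a block mapped into itself is split off as a
  local map, and otherwise a largest moved block B is split off together with its target block C
  as an exchange.\<close>
theorem Sigmapart_subset: "Sigmapart X P \<subseteq> G"
proof
  fix f assume "f \<in> Sigmapart X P"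
  then show "f \<in> G"
  proof (induction "card (moved_blocks f)" arbitrary: f rule: less_induct)
    case less
    have smaller: "g \<in> G" if "g \<in> Sigmapart X P" "moved_blocks g \<subseteq> moved_blocks f - {D}"
      "D \<in> moved_blocks f" for g D
    proof -
      have "card (moved_blocks g) \<le> card (moved_blocks f - {D})"
        using that(2) finite_moved_blocks by (intro card_mono) auto
      also have "\<dots> < card (moved_blocks f)"
        using finite_moved_blocks that(3) by (rule card_Diff1_less)
      finally show ?thesis using less.hyps that(1) by blast
    qed
    consider "moved_blocks f = {}" | D where "D \<in> moved_blocks f" "f ` D \<subseteq> D"
      | "moved_blocks f \<noteq> {}" "\<forall>D\<in>moved_blocks f. \<not> f ` D \<subseteq> D" by blast
    then show ?case
    proof cases
      case 1
      then show ?thesis using no_moved_blocks_Spart less.prems Spart_subset by blast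
    next
      case (2 D)
      then have "D \<in> P" unfolding moved_blocks_def by blast
      obtain g where "g \<in> Sigmapart X P" "moved_blocks g \<subseteq> moved_blocks f - {D}"
        and f: "f = compose X g (local_map D f)"
        using Sigmapart_factor_local_map less.prems 2(2) \<open>D \<in> P\<close> by blast
      then have "g \<in> G" using smaller 2(1) by blast
      then show ?thesis using compose_closed local_map_in[OF \<open>D \<in> P\<close> 2(2)] f by metis
    next
      case 3
      then obtain B C \<iota> g where BC: "B \<in> P" "C \<in> P" "B \<noteq> C" "f ` B \<subseteq> C" "\<iota> ` C \<subseteq> B"
        and C: "C \<in> moved_blocks f" and "g \<in> Sigmapart X P" "moved_blocks g \<subseteq> moved_blocks f - {C}"
        and f: "f = compose X g (exchange B C f \<iota>)"
        using Sigmapart_factor_exchange[OF less.prems] by blast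
      then have "g \<in> G" using smaller C by blast
      then show ?thesis using compose_closed exchange_in[OF BC] f by metis
    qed
  qed
qed

end

section \<open>The relative rank\<close>

context finite_partition
begin

lemma gen_sg_eq_Sigmapart:
  assumes W: "W \<subseteq> Sigmapart X P"
    and adjacent: "\<And>a b. a \<in> sizes \<Longrightarrow> b \<in> sizes \<Longrightarrow> a < b \<Longrightarrow>
      \<not> (\<exists>z\<in>sizes. a < z \<and> z < b) \<Longrightarrow> \<exists>w\<in>W. standard_exchange_of_sizes b a w"
    and gap: "\<And>s. s \<in> sizes \<Longrightarrow> 2 \<le> s \<Longrightarrow> s - 1 \<notin> sizes \<Longrightarrow> \<exists>w\<in>W. collapse_of_size s w"
  shows "gen_sg X (Spart X P \<union> W) = Sigmapart X P"
proof
  have "W \<subseteq> gen_sg X (Spart X P \<union> W)" by (auto intro: gen_sg.base)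
  then interpret generating_family X P "gen_sg X (Spart X P \<union> W)"
    using adjacent gap by unfold_locales (auto intro: gen_sg.intros, blast+)
  show "Sigmapart X P \<subseteq> gen_sg X (Spart X P \<union> W)" by (rule Sigmapart_subset)
  show "gen_sg X (Spart X P \<union> W) \<subseteq> Sigmapart X P"
    using gen_sg_subset_Sigmapart W Spart_subset_Sigmapart by blast
qed

lemma adjacent_sizes_cases:
  assumes "a \<in> sizes" "b \<in> sizes" "a < b" "\<not> (\<exists>z\<in>sizes. a < z \<and> z < b)"
  shows "a = b - 1 \<and> b \<in> nontrivial_sizes \<or> b \<in> gap_sizes \<and> prev_size b = a"
proof (cases "a = b - 1")
  case True
  then show ?thesis using assms sizes_positive[of a] unfolding nontrivial_sizes_def by auto
next
  case False
  have "b - 1 \<notin> sizes"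
  proof
    assume "b - 1 \<in> sizes"
    moreover have "a < b - 1" "b - 1 < b" using False assms(3) by auto
    ultimately show False using assms(4) by blast
  qed
  then have b: "b \<in> gap_sizes" using assms sizes_positive[of a] unfolding gap_sizes_def by auto
  then have "a \<le> prev_size b" using le_prev_size assms by blast
  then show ?thesis using b prev_size_in_sizes[OF b] prev_size_less[OF b] assms(4) by fastforce
qed

text \<open>One generator per nontrivial size s (an exchange onto size s - 1 if that size occurs, a
  collapse otherwise) and one exchange per gap size.\<close>
lemma exists_generating_set:
  obtains W where "W \<subseteq> Sigmapart X P" "finite W" "card W \<le> card nontrivial_sizes + card gap_sizes"
    "gen_sg X (Spart X P \<union> W) = Sigmapart X P"
proof -
  have "\<forall>s\<in>nontrivial_sizes. \<exists>w. if s - 1 \<in> sizes then standard_exchange_of_sizes s (s - 1) w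
      else collapse_of_size s w"
  proof
    fix s assume s: "s \<in> nontrivial_sizes"
    then show "\<exists>w. if s - 1 \<in> sizes then standard_exchange_of_sizes s (s - 1) w
        else collapse_of_size s w"
      using standard_exchange_of_sizes_exists[of "s - 1" s] collapse_of_size_exists[OF s]
      unfolding nontrivial_sizes_def by auto
  qed
  then obtain w1 where w1: "\<forall>s\<in>nontrivial_sizes. if s - 1 \<in> sizes
      then standard_exchange_of_sizes s (s - 1) (w1 s) else collapse_of_size s (w1 s)"
    by (rule bchoice[elim_format]) blast
  have "\<forall>b\<in>gap_sizes. \<exists>w. standard_exchange_of_sizes b (prev_size b) w"
    using standard_exchange_of_sizes_exists prev_size_in_sizes prev_size_less
    unfolding gap_sizes_def by blast
  then obtain w2 where w2: "\<forall>b\<in>gap_sizes. standard_exchange_of_sizes b (prev_size b) (w2 b)"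
    by (rule bchoice[elim_format]) blast
  define W where "W = w1 ` nontrivial_sizes \<union> w2 ` gap_sizes"
  have fin: "finite nontrivial_sizes" "finite gap_sizes"
    using finite_sizes unfolding nontrivial_sizes_def gap_sizes_def by auto
  show thesis
  proof
    show W: "W \<subseteq> Sigmapart X P" unfolding W_def
      using w1 w2 standard_exchange_of_sizes_Sigmapart collapse_of_size_Sigmapart by (auto split: if_splits)
    show "finite W" unfolding W_def using fin by simp
    have "card W \<le> card (w1 ` nontrivial_sizes) + card (w2 ` gap_sizes)"
      unfolding W_def by (rule card_Un_le)
    also have "\<dots> \<le> card nontrivial_sizes + card gap_sizes"
      by (intro add_mono card_image_le fin)
    finally show "card W \<le> card nontrivial_sizes + card gap_sizes" .
    show "gen_sg X (Spart X P \<union> W) = Sigmapart X P"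
    proof (rule gen_sg_eq_Sigmapart[OF W])
      fix a b assume "a \<in> sizes" "b \<in> sizes" "a < b" "\<not> (\<exists>z\<in>sizes. a < z \<and> z < b)"
      then consider "a = b - 1" "b \<in> nontrivial_sizes" | "b \<in> gap_sizes" "prev_size b = a"
        using adjacent_sizes_cases by blast
      then show "\<exists>w\<in>W. standard_exchange_of_sizes b a w"
        using w1 w2 \<open>a \<in> sizes\<close> unfolding W_def by cases (metis UnI1 imageI, metis UnI2 imageI)
    next
      fix s assume "s \<in> sizes" "2 \<le> s" "s - 1 \<notin> sizes"
      then show "\<exists>w\<in>W. collapse_of_size s w"
        using w1 unfolding W_def nontrivial_sizes_def by force
    qed
  qed
qed

theorem rel_rank_Sigmapart_Spart:
  "rel_rank X (Sigmapart X P) (Spart X P) = card nontrivial_sizes + card gap_sizes"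
proof -
  obtain W where W: "W \<subseteq> Sigmapart X P" "finite W" "card W \<le> card nontrivial_sizes + card gap_sizes"
    "gen_sg X (Spart X P \<union> W) = Sigmapart X P"
    using exists_generating_set by blast
  then have "card W = card nontrivial_sizes + card gap_sizes"
    using card_sizes_le_card_generators[OF W(1,2,4)] by simp
  then show ?thesis
    unfolding rel_rank_def using W card_sizes_le_card_generators by (intro Least_equality) auto
qed

lemma card_blocks_of_size_eq_0_iff: "card {B \<in> P. card B = c} = 0 \<longleftrightarrow> c \<notin> sizes"
  using finite_blocks unfolding sizes_def by auto

text \<open>Unlike gap_sizes, the paper's count l also includes the smallest block size when there are
  no singleton blocks.\<close>
lemma card_sizes_without_predecessor:
  assumes "X \<noteq> {}"
  shows "card {s. 2 \<le> s \<and> s \<in> sizes \<and> s - 1 \<notin> sizes} = card gap_sizes + (if 1 \<in> sizes then 0 else 1)"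
proof (cases "1 \<in> sizes")
  case True
  then have "{s. 2 \<le> s \<and> s \<in> sizes \<and> s - 1 \<notin> sizes} = gap_sizes"
    unfolding gap_sizes_def by force
  then show ?thesis using True by simp
next
  case False
  define m where "m = Min sizes"
  have "sizes \<noteq> {}" using assms block_size_in_sizes by blast
  then have m: "m \<in> sizes" "\<And>z. z \<in> sizes \<Longrightarrow> m \<le> z" unfolding m_def using finite_sizes by auto
  have "2 \<le> m" using m(1) False sizes_positive[OF m(1)] by (cases "m = 1") auto
  then have "{s. 2 \<le> s \<and> s \<in> sizes \<and> s - 1 \<notin> sizes} = insert m gap_sizes"
    using m unfolding gap_sizes_def by (force simp: not_less)
  moreover have "m \<notin> gap_sizes" using m(2) unfolding gap_sizes_def by (auto simp: not_less)
  moreover have "finite gap_sizes" using finite_sizes unfolding gap_sizes_def by simp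
  ultimately show ?thesis using False by simp
qed

lemma nontrivial_sizes_nonempty: "X \<noteq> {} \<Longrightarrow> 1 \<notin> sizes \<Longrightarrow> nontrivial_sizes \<noteq> {}"
  using block_size_in_sizes sizes_positive unfolding nontrivial_sizes_def
  by (metis One_nat_def Suc_1 Suc_leI all_not_in_conv le_neq_implies_less mem_Collect_eq)

theorem rel_rank_Sigmapart_Spart_sizes:
  assumes "X \<noteq> {}"
  shows "rel_rank X (Sigmapart X P) (Spart X P) = card nontrivial_sizes + (if 1 \<in> sizes then 1 else 0) - 1
    + card {s. 2 \<le> s \<and> s \<in> sizes \<and> s - 1 \<notin> sizes}"
proof -
  have "1 \<notin> sizes \<Longrightarrow> card nontrivial_sizes > 0"
    using nontrivial_sizes_nonempty[OF assms] finite_sizes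
    unfolding nontrivial_sizes_def by (simp add: card_gt_0_iff)
  then show ?thesis
    using rel_rank_Sigmapart_Spart card_sizes_without_predecessor[OF assms] by (cases "1 \<in> sizes") auto
qed

end

theorem corollary4p7:
  fixes X :: "'a set" and P :: "'a set set"
    and p q t :: nat and n m lsz :: "nat \<Rightarrow> nat"
  assumes "finite X" "X \<noteq> {}" "partition_on X P"
    and "\<forall>i<p. n i \<ge> 2 \<and> m i \<ge> 2" "inj_on n {..<p}"
    and "\<forall>i<q. lsz i \<ge> 2" "inj_on lsz {..<q}"
    and "n ` {..<p} \<inter> lsz ` {..<q} = {}"
    and "\<forall>i<p. card {B \<in> P. card B = n i} = m i"
    and "\<forall>i<q. card {B \<in> P. card B = lsz i} = 1"
    and "card {B \<in> P. card B = 1} = t"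
    and "\<forall>B\<in>P. card B = 1 \<or> card B \<in> n ` {..<p} \<or> card B \<in> lsz ` {..<q}"
  shows "rel_rank X (Sigmapart X P) (Spart X P)
    = p + q + (if t = 0 then 0 else 1) - 1
      + card {s::nat. s \<ge> 2 \<and> (\<exists>B\<in>P. card B = s) \<and> \<not> (\<exists>B\<in>P. card B = s - 1)}"
proof -
  interpret finite_partition X P using assms(1,3) by unfold_locales
  \<comment> \<open>Only which block sizes occur matters.\<close>
  let ?N = "n ` {..<p} \<union> lsz ` {..<q}"
  have one: "1 \<in> sizes \<longleftrightarrow> t \<noteq> 0"
    using card_blocks_of_size_eq_0_iff[of 1] assms(11) by auto
  have "n i \<in> sizes" if "i < p" for i
    using card_blocks_of_size_eq_0_iff[of "n i"] assms(4,9) that by fastforce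
  moreover have "lsz i \<in> sizes" if "i < q" for i
    using card_blocks_of_size_eq_0_iff[of "lsz i"] assms(10) that by fastforce
  ultimately have "?N \<subseteq> sizes" by blast
  moreover have "sizes \<subseteq> insert 1 ?N" using assms(12) unfolding sizes_def by blast
  moreover have "2 \<le> s" if "s \<in> ?N" for s using assms(4,6) that by auto
  ultimately have "nontrivial_sizes = ?N" unfolding nontrivial_sizes_def by auto
  moreover have "card ?N = p + q"
    using assms(5,7,8) by (simp add: card_Un_disjoint card_image)
  moreover have "(\<exists>B\<in>P. card B = s) \<longleftrightarrow> s \<in> sizes" for s unfolding sizes_def by auto
  ultimately show ?thesis
    using rel_rank_Sigmapart_Spart_sizes[OF assms(2)] one by simp
qed

end
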